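(* For $j=1,\dots,n$ let $$Z_j=\langle\zeta\rangle^{-1}(hD_{z_j}-\zeta_j)+\tfrac12\langle\zeta\rangle^{-3}\zeta_j(hD_z-\zeta)^2-ihD_{\zeta_j}-\tfrac n4h\langle\zeta\rangle^{-2}\zeta_j,$$ a differential operator with holomorphic coefficients, where $D=-i\partial$ (holomorphic derivatives) and $(hD_z-\zeta)^2=\sum_k(hD_{z_k}-\zeta_k)^2$. Then for $u\in\mathscr A_\delta$ ($\delta>0$ small), the holomorphic function $Tu(z,\zeta)$ satisfies $Z_jTu=0$ near $\Lambda$; consequently, with $Z_j^\Lambda=Z_j|_\Lambda$ the restriction of $Z_j$ to the totally real submanifold $\Lambda$, $$Z_j^\Lambda T_\Lambda u(\alpha)=0,\qquad j=1,\dots,n .$$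
   Context: $\mathbb T^n=\mathbb R^n/2\pi\mathbb Z^n$, $h>0$; $\langle\zeta\rangle=(1+\sum\zeta_j^2)^{1/2}$. $\mathscr A_\delta=\{u\in L^2(\mathbb T^n):\sum_k|\hat u(k)|^2e^{4|k|\delta}<\infty\}$. $Tu(z,\zeta)=h^{-3n/4}\int_{\mathbb R^n}e^{\frac ih(\langle z-y,\zeta\rangle+\frac i2\langle\zeta\rangle(z-y)^2)}\langle\zeta\rangle^{n/4}u(y)dy$ ($u$ extended periodically). $\Lambda=\{(x+iG_\xi,\xi-iG_x):(x,\xi)\in T^*\mathbb T^n\}$ where $G\in S^1(T^*\mathbb T^n;\mathbb R)$ with $\sup_{|\alpha|+|\beta|\le2}\langle\xi\rangle^{-1+|\beta|}|\partial_x^\alpha\partial_\xi^\beta G|$ small; $T_\Lambda u=Tu|_\Lambda$. *)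

theory Defs
  imports "HOL-Analysis.Analysis"
begin

text \<open>Functions on the torus R^n / 2 pi Z^n are represented as 2 pi-periodic functions
  on R^n (this is also their periodic extension used in the FBI transform).\<close>

definition torus_periodic :: "(real^'n::finite \<Rightarrow> 'b) \<Rightarrow> bool" where
  "torus_periodic u \<longleftrightarrow> (\<forall>y i. u (y + (2 * pi) *\<^sub>R axis i 1) = u y)"

definition torus_cube :: "(real^'n::finite) set" where
  "torus_cube = cbox 0 (\<chi> i. 2 * pi)"

definition L2_torus :: "(real^'n::finite \<Rightarrow> complex) set" where
  "L2_torus = {u. torus_periodic u \<and> u \<in> borel_measurable lborel \<and>
      integrable (restrict_space lborel torus_cube) (\<lambda>y. (cmod (u y))\<^sup>2)}"

definition fourier_coeff :: "(real^'n::finite \<Rightarrow> complex) \<Rightarrow> int^'n \<Rightarrow> complex" where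
  "fourier_coeff u k = complex_of_real ((2 * pi) powr (- real CARD('n))) *
     (LINT y|restrict_space lborel torus_cube.
        u y * exp (- \<i> * complex_of_real (\<Sum>j\<in>UNIV. of_int (k $ j) * y $ j)))"

definition int_vec_norm :: "int^'n::finite \<Rightarrow> real" where
  "int_vec_norm k = norm ((\<chi> j. of_int (k $ j)) :: real^'n)"

definition A_delta :: "real \<Rightarrow> (real^'n::finite \<Rightarrow> complex) set" where
  "A_delta \<delta> = {u \<in> L2_torus.
      (\<lambda>k::int^'n. (cmod (fourier_coeff u k))\<^sup>2 * exp (4 * int_vec_norm k * \<delta>)) summable_on UNIV}"

definition jap :: "complex^'n::finite \<Rightarrow> complex" where
  "jap \<zeta> = csqrt (1 + (\<Sum>j\<in>UNIV. (\<zeta> $ j)\<^sup>2))"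

definition FBI :: "real \<Rightarrow> (real^'n::finite \<Rightarrow> complex) \<Rightarrow> complex^'n \<Rightarrow> complex^'n \<Rightarrow> complex" where
  "FBI h u z \<zeta> = complex_of_real (h powr (- 3 * real CARD('n) / 4)) *
     (LINT y|lborel.
        exp ((\<i> / complex_of_real h) *
             ((\<Sum>j\<in>UNIV. (z $ j - complex_of_real (y $ j)) * \<zeta> $ j)
              + (\<i> / 2) * jap \<zeta> * (\<Sum>j\<in>UNIV. (z $ j - complex_of_real (y $ j))\<^sup>2)))
        * jap \<zeta> powr (complex_of_real (real CARD('n) / 4)) * u y)"

definition cvec_upd :: "complex^'n::finite \<Rightarrow> 'n \<Rightarrow> complex \<Rightarrow> complex^'n" where
  "cvec_upd v j w = (\<chi> k. if k = j then w else v $ k)"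

type_synonym 'n cfun = "complex^'n \<Rightarrow> complex^'n \<Rightarrow> complex"

definition dz :: "'n::finite \<Rightarrow> 'n cfun \<Rightarrow> 'n cfun" where
  "dz j F = (\<lambda>z \<zeta>. deriv (\<lambda>w. F (cvec_upd z j w) \<zeta>) (z $ j))"

definition dzeta :: "'n::finite \<Rightarrow> 'n cfun \<Rightarrow> 'n cfun" where
  "dzeta j F = (\<lambda>z \<zeta>. deriv (\<lambda>w. F z (cvec_upd \<zeta> j w)) (\<zeta> $ j))"

definition Aop :: "real \<Rightarrow> 'n::finite \<Rightarrow> 'n cfun \<Rightarrow> 'n cfun" where
  "Aop h k F = (\<lambda>z \<zeta>. complex_of_real h * (- \<i>) * dz k F z \<zeta> - \<zeta> $ k * F z \<zeta>)"

definition Zop :: "real \<Rightarrow> 'n::finite \<Rightarrow> 'n cfun \<Rightarrow> 'n cfun" where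
  "Zop h j F = (\<lambda>z \<zeta>.
      inverse (jap \<zeta>) * Aop h j F z \<zeta>
    + (1/2) * inverse (jap \<zeta> ^ 3) * \<zeta> $ j * (\<Sum>k\<in>UNIV. Aop h k (Aop h k F) z \<zeta>)
    - \<i> * complex_of_real h * ((- \<i>) * dzeta j F z \<zeta>)
    - complex_of_real (real CARD('n) / 4 * h) * inverse (jap \<zeta> ^ 2) * \<zeta> $ j * F z \<zeta>)"

definition sep_holomorphic_at :: "'n::finite cfun \<Rightarrow> complex^'n \<Rightarrow> complex^'n \<Rightarrow> bool" where
  "sep_holomorphic_at F z \<zeta> \<longleftrightarrow>
     (\<forall>j. (\<lambda>w. F (cvec_upd z j w) \<zeta>) field_differentiable (at (z $ j)) \<and>
          (\<lambda>w. F z (cvec_upd \<zeta> j w)) field_differentiable (at (\<zeta> $ j)))"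

text \<open>Real partial derivatives of G(x,xi): Inl i = d/dx_i, Inr i = d/dxi_i.\<close>
type_synonym 'n rfun = "real^'n \<Rightarrow> real^'n \<Rightarrow> real"

fun rpd :: "('n::finite + 'n) \<Rightarrow> 'n rfun \<Rightarrow> 'n rfun" where
  "rpd (Inl i) G = (\<lambda>x \<xi>. deriv (\<lambda>t. G (x + t *\<^sub>R axis i 1) \<xi>) 0)"
| "rpd (Inr i) G = (\<lambda>x \<xi>. deriv (\<lambda>t. G x (\<xi> + t *\<^sub>R axis i 1)) 0)"

definition rpds :: "('n::finite + 'n) list \<Rightarrow> 'n rfun \<Rightarrow> 'n rfun" where
  "rpds ds G = foldr rpd ds G"

definition n_xi :: "('n::finite + 'n) list \<Rightarrow> nat" where
  "n_xi ds = length (filter (\<lambda>d. \<not> isl d) ds)"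

definition rjap :: "real^'n::finite \<Rightarrow> real" where
  "rjap \<xi> = sqrt (1 + (norm \<xi>)\<^sup>2)"

definition symbol_S1 :: "'n::finite rfun \<Rightarrow> bool" where
  "symbol_S1 G \<longleftrightarrow>
     (\<forall>x \<xi> i. G (x + (2 * pi) *\<^sub>R axis i 1) \<xi> = G x \<xi>) \<and>
     (\<forall>ds. continuous_on UNIV (\<lambda>p. rpds ds G (fst p) (snd p))) \<and>
     (\<forall>ds x \<xi> i. (\<lambda>t. rpds ds G (x + t *\<^sub>R axis i 1) \<xi>) differentiable (at 0) \<and>
                 (\<lambda>t. rpds ds G x (\<xi> + t *\<^sub>R axis i 1)) differentiable (at 0)) \<and>
     (\<forall>ds. \<exists>C. \<forall>x \<xi>. \<bar>rpds ds G x \<xi>\<bar> \<le> C * rjap \<xi> powr (1 - real (n_xi ds)))"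

definition seminorm2 :: "'n::finite rfun \<Rightarrow> real" where
  "seminorm2 G = Sup {rjap \<xi> powr (real (n_xi ds) - 1) * \<bar>rpds ds G x \<xi>\<bar> |
                       ds x \<xi>. length ds \<le> 2}"

definition Lambda_pt :: "'n::finite rfun \<Rightarrow> real^'n \<Rightarrow> real^'n \<Rightarrow> (complex^'n) \<times> (complex^'n)" where
  "Lambda_pt G x \<xi> =
     ((\<chi> k. complex_of_real (x $ k) + \<i> * complex_of_real (rpd (Inr k) G x \<xi>)),
      (\<chi> k. complex_of_real (\<xi> $ k) - \<i> * complex_of_real (rpd (Inl k) G x \<xi>)))"

definition Lambda :: "'n::finite rfun \<Rightarrow> ((complex^'n) \<times> (complex^'n)) set" where
  "Lambda G = range (\<lambda>(x, \<xi>). Lambda_pt G x \<xi>)"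

end

(*
  Where Re (1 + sum_j zeta_j^2) > 0, the holomorphic Japanese bracket <zeta> has positive real
  part, so the FBI kernel is a Gaussian in y, locally uniformly in (z, zeta). Against a periodic,
  locally square-integrable u it is therefore integrable, and Cauchy's estimates allow one to
  differentiate under the integral sign in every complex variable. A direct computation shows
  that Z_j annihilates the kernel for each fixed y, hence Z_j Tu = 0 on the open set
  C^n x {Re (1 + sum_j zeta_j^2) > 0}. This set contains Lambda as soon as the S^1 seminorm s of G
  satisfies n s^2 < 1, since there Re (1 + sum_j (xi_j - i dG/dx_j)^2) >= (1 - n s^2) (1 + |xi|^2).
  The exponential decay of the Fourier coefficients of u in A_delta is never used: u in L^2
  suffices.
*)

theory Submission
  imports Defs "HOL-Complex_Analysis.Cauchy_Integral_Formula" "HOL-Probability.Distributions"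
begin

definition fundamental_cell :: "(real^'n::finite) set" where
  "fundamental_cell = {t. \<forall>j. 0 \<le> t$j \<and> t$j < 2*pi}"

definition lattice_point :: "('n::finite \<Rightarrow> int) \<Rightarrow> real^'n" where
  "lattice_point k = (\<chi> j. 2*pi * of_int (k j))"

lemma fundamental_cell_borel [measurable]:
  "fundamental_cell \<in> sets (borel :: (real^'n::finite) measure)"
  unfolding fundamental_cell_def by measurable

lemma lattice_translate_in_fundamental_cell_unique:
  fixes y :: "real^'n::finite"
  assumes "y - lattice_point k \<in> fundamental_cell" "y - lattice_point k' \<in> fundamental_cell"
  shows "k = k'"
proof
  fix j
  from assms have "0 \<le> y$j - 2*pi*k j" "y$j - 2*pi*k j < 2*pi"
    "0 \<le> y$j - 2*pi*k' j" "y$j - 2*pi*k' j < 2*pi"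
    by (auto simp: fundamental_cell_def lattice_point_def)
  then have "2*pi*(real_of_int (k j) - k' j - 1) < 0" "2*pi*(real_of_int (k' j) - k j - 1) < 0"
    by (simp_all add: algebra_simps)
  then have "real_of_int (k j) - k' j - 1 < 0" "real_of_int (k' j) - k j - 1 < 0"
    using pi_gt_zero by (simp_all add: mult_less_0_iff)
  then show "k j = k' j" by linarith
qed

lemma ex_lattice_translate_in_fundamental_cell:
  fixes y :: "real^'n::finite"
  shows "\<exists>k. y - lattice_point k \<in> fundamental_cell"
proof
  define k where "k j = \<lfloor>y$j / (2*pi)\<rfloor>" for j
  show "y - lattice_point k \<in> fundamental_cell"
    unfolding fundamental_cell_def
  proof safe
    fix j
    have "real_of_int (k j) \<le> y$j / (2*pi)" "y$j / (2*pi) < real_of_int (k j) + 1"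
      unfolding k_def by linarith+
    then have "2*pi * real_of_int (k j) \<le> y$j" "y$j < 2*pi * (real_of_int (k j) + 1)"
      using pi_gt_zero by (simp_all add: field_simps)
    then show "0 \<le> (y - lattice_point k) $ j" "(y - lattice_point k) $ j < 2 * pi"
      by (simp_all add: lattice_point_def algebra_simps)
  qed
qed

lemma nn_integral_lborel_translate:
  fixes g :: "'a::euclidean_space \<Rightarrow> ennreal"
  assumes [measurable]: "g \<in> borel_measurable borel"
  shows "(\<integral>\<^sup>+t. g (t + c) \<partial>lborel) = (\<integral>\<^sup>+y. g y \<partial>lborel)"
proof -
  have "(\<integral>\<^sup>+y. g y \<partial>lborel) = (\<integral>\<^sup>+y. g y \<partial>distr lborel borel ((+) c))"
    by (simp add: lborel_distr_plus)
  also have "\<dots> = (\<integral>\<^sup>+t. g (c + t) \<partial>lborel)"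
    by (rule nn_integral_distr) auto
  finally show ?thesis by (simp add: add.commute)
qed

lemma nn_integral_lattice_tiling:
  fixes \<phi> :: "real^'n::finite \<Rightarrow> ennreal"
  assumes [measurable]: "\<phi> \<in> borel_measurable borel"
  shows "(\<integral>\<^sup>+y. \<phi> y \<partial>lborel) =
     (\<integral>\<^sup>+k. (\<integral>\<^sup>+t. \<phi> (t + lattice_point k) * indicator fundamental_cell t \<partial>lborel) \<partial>count_space UNIV)"
proof -
  have tiles: "\<phi> y = (\<integral>\<^sup>+k. \<phi> y * indicator fundamental_cell (y - lattice_point k) \<partial>count_space UNIV)"
    for y
  proof -
    obtain k0 where k0: "y - lattice_point k0 \<in> fundamental_cell"
      using ex_lattice_translate_in_fundamental_cell by blast
    have "indicator fundamental_cell (y - lattice_point k) = (indicator {k0} k :: ennreal)" for k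
      using k0 lattice_translate_in_fundamental_cell_unique[of y k k0]
      by (cases "k = k0") (auto simp: indicator_def)
    then show ?thesis by (simp add: nn_integral_cmult_indicator)
  qed
  have "(\<integral>\<^sup>+y. \<phi> y \<partial>lborel) =
      (\<integral>\<^sup>+y. (\<integral>\<^sup>+k. \<phi> y * indicator fundamental_cell (y - lattice_point k) \<partial>count_space UNIV) \<partial>lborel)"
    by (rule nn_integral_cong) (rule tiles)
  also have "\<dots> =
      (\<integral>\<^sup>+k. (\<integral>\<^sup>+y. \<phi> y * indicator fundamental_cell (y - lattice_point k) \<partial>lborel) \<partial>count_space UNIV)"
    by (rule nn_integral_count_space_nn_integral) (simp, measurable)
  also have "\<dots> =
      (\<integral>\<^sup>+k. (\<integral>\<^sup>+t. \<phi> (t + lattice_point k) * indicator fundamental_cell t \<partial>lborel) \<partial>count_space UNIV)"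
  proof (rule nn_integral_cong)
    fix k
    show "(\<integral>\<^sup>+y. \<phi> y * indicator fundamental_cell (y - lattice_point k) \<partial>lborel) =
        (\<integral>\<^sup>+t. \<phi> (t + lattice_point k) * indicator fundamental_cell t \<partial>lborel)"
      using nn_integral_lborel_translate[of "\<lambda>y. \<phi> y * indicator fundamental_cell (y - lattice_point k)" "lattice_point k"]
      by simp
  qed
  finally show ?thesis .
qed

lemma periodic_of_int_scaleR:
  fixes f :: "'a::real_vector \<Rightarrow> 'b"
  assumes "\<And>y. f (y + v) = f y"
  shows "f (y + of_int m *\<^sub>R v) = f y"
proof (induction m arbitrary: y rule: int_induct[where k = 0])
  case base
  then show ?case by simp
next
  case (step1 i)
  have "f (y + of_int (i + 1) *\<^sub>R v) = f ((y + of_int i *\<^sub>R v) + v)"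
    by (simp add: algebra_simps)
  then show ?case by (simp add: assms step1.IH)
next
  case (step2 i)
  have "f (y + of_int i *\<^sub>R v) = f ((y + of_int (i - 1) *\<^sub>R v) + v)"
    by (simp add: algebra_simps)
  then show ?case by (simp add: assms step2.IH)
qed

lemma torus_periodic_lattice_point:
  assumes "torus_periodic u"
  shows "u (t + lattice_point k) = u t"
proof -
  have "u (t + (\<Sum>i\<in>S. of_int (k i) *\<^sub>R ((2*pi) *\<^sub>R axis i 1))) = u t" if "finite S" for S
    using that
  proof (induction S arbitrary: t rule: finite_induct)
    case (insert i S)
    then show ?case
      using periodic_of_int_scaleR[of u "(2*pi) *\<^sub>R axis i 1" _ "k i"] assms
      by (simp add: torus_periodic_def add.assoc[symmetric] add.commute[of _ "of_int (k i) *\<^sub>R _"])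
  qed simp
  moreover have "lattice_point k = (\<Sum>i\<in>UNIV. of_int (k i) *\<^sub>R ((2*pi) *\<^sub>R axis i (1::real)))"
    by (simp add: vec_eq_iff lattice_point_def axis_def if_distrib[of "(*) _"] cong: if_cong)
  ultimately show ?thesis by simp
qed

lemma integrable_gaussian_real:
  fixes a :: real
  assumes "a > 0"
  shows "integrable lborel (\<lambda>x::real. exp (- a * x\<^sup>2))"
proof -
  define \<sigma> where "\<sigma> = sqrt (1 / (2 * a))"
  have \<sigma>: "\<sigma> > 0" "\<sigma>\<^sup>2 = 1 / (2*a)"
    using assms by (simp_all add: \<sigma>_def)
  have "exp (- a * x\<^sup>2) = sqrt (2 * pi * \<sigma>\<^sup>2) * normal_density 0 \<sigma> x" for x
    using assms \<sigma> pi_gt_zero unfolding normal_density_def by (simp add: field_simps)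
  then show ?thesis
    using \<sigma> by simp
qed

lemma nn_integral_gaussian_finite:
  fixes a :: real
  assumes "a > 0"
  shows "(\<integral>\<^sup>+x. ennreal (exp (- a * (norm (x::'a::euclidean_space))\<^sup>2)) \<partial>lborel) < \<infinity>"
proof -
  have product: "ennreal (exp (- a * (norm x)\<^sup>2)) = (\<Prod>b\<in>Basis. ennreal (exp (- a * (x \<bullet> b)\<^sup>2)))"
    for x :: 'a
  proof -
    have "(norm x)\<^sup>2 = (\<Sum>b\<in>Basis. (x \<bullet> b)\<^sup>2)"
      unfolding power2_norm_eq_inner using euclidean_inner[of x x] by (simp add: power2_eq_square)
    then show ?thesis
      by (simp add: sum_distrib_left exp_sum[symmetric] sum_negf prod_ennreal)
  qed
  have "(\<integral>\<^sup>+x. ennreal (exp (- a * x\<^sup>2)) \<partial>lborel) < \<infinity>"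
    using integrableD(2)[OF integrable_gaussian_real[OF assms]] by (simp add: top.not_eq_extremum)
  moreover have "(\<integral>\<^sup>+x. ennreal (exp (- a * (norm (x::'a))\<^sup>2)) \<partial>lborel)
      = (\<Prod>b\<in>(Basis::'a set). (\<integral>\<^sup>+x. ennreal (exp (- a * x\<^sup>2)) \<partial>lborel))"
    unfolding product by (rule nn_integral_lborel_prod) auto
  ultimately show ?thesis by (simp add: power_less_top_ennreal)
qed

lemma gaussian_le_translate:
  fixes a b :: "'a::real_normed_vector"
  assumes "\<beta> > 0" "norm (b - a) \<le> d"
  shows "exp (- \<beta> * (norm a)\<^sup>2) \<le> exp (\<beta> * d\<^sup>2) * exp (- (\<beta>/2) * (norm b)\<^sup>2)"
proof -
  have "norm b \<le> norm a + d"
    using assms(2) norm_triangle_ineq2[of b a] by linarith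
  then have "(norm b)\<^sup>2 \<le> (norm a + d)\<^sup>2"
    by (simp add: power_mono)
  also have "\<dots> \<le> 2 * (norm a)\<^sup>2 + 2 * d\<^sup>2"
    using sum_squares_ge_zero[of "norm a - d" 0] by (simp add: power2_eq_square algebra_simps)
  finally have "(\<beta>/2) * (norm b)\<^sup>2 \<le> (\<beta>/2) * (2 * (norm a)\<^sup>2 + 2 * d\<^sup>2)"
    using assms(1) by (intro mult_left_mono) auto
  then show ?thesis
    by (simp add: exp_add[symmetric] algebra_simps)
qed

lemma norm_diff_fundamental_cell_le:
  fixes t t' :: "real^'n::finite"
  assumes "t \<in> fundamental_cell" "t' \<in> fundamental_cell"
  shows "norm (t' - t) \<le> CARD('n) * (2*pi)"
proof -
  have "norm (t' - t) \<le> (\<Sum>i\<in>UNIV. \<bar>(t' - t)$i\<bar>)"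
    by (rule norm_le_l1_cart)
  also have "\<dots> \<le> (\<Sum>i\<in>(UNIV::'n set). 2*pi)"
  proof (rule sum_mono)
    fix i
    have "0 \<le> t$i" "t$i < 2*pi" "0 \<le> t'$i" "t'$i < 2*pi"
      using assms by (auto simp: fundamental_cell_def)
    then show "\<bar>(t' - t)$i\<bar> \<le> 2*pi" by (simp add: abs_le_iff)
  qed
  finally show ?thesis by simp
qed

lemma emeasure_fundamental_cell_nonzero:
  "emeasure lborel (fundamental_cell :: (real^'n::finite) set) \<noteq> 0"
proof -
  have "box 0 (\<chi> i. 2*pi) \<subseteq> (fundamental_cell :: (real^'n) set)"
    by (auto simp: fundamental_cell_def mem_box_cart less_imp_le)
  then have "emeasure lborel (box 0 (\<chi> i. 2*pi) :: (real^'n) set) \<le> emeasure lborel (fundamental_cell :: (real^'n) set)"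
    by (intro emeasure_mono) auto
  moreover have "emeasure lborel (box 0 (\<chi> i. 2*pi) :: (real^'n) set) \<noteq> 0"
  proof -
    have "(\<Prod>b\<in>(Basis::(real^'n) set). ((\<chi> i. 2*pi) - 0) \<bullet> b) > (0::real)"
      by (rule prod_pos) (auto simp: Basis_vec_def inner_axis)
    then show ?thesis by (subst emeasure_lborel_box) (auto simp: Basis_vec_def inner_axis)
  qed
  ultimately show ?thesis by (metis le_zero_eq)
qed

lemma nn_integral_norm_fundamental_cell_finite:
  fixes u :: "real^'n::finite \<Rightarrow> complex"
  assumes "u \<in> L2_torus"
  shows "(\<integral>\<^sup>+t. ennreal (norm (u t)) * indicator fundamental_cell t \<partial>lborel) < \<infinity>"
proof -
  have [measurable]: "u \<in> borel_measurable borel" "torus_cube \<in> sets (borel :: (real^'n) measure)"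
    using assms by (simp_all add: L2_torus_def torus_cube_def)
  have "integrable (restrict_space lborel torus_cube) (\<lambda>y. (cmod (u y))\<^sup>2)"
    using assms by (simp add: L2_torus_def)
  then have square: "(\<integral>\<^sup>+t. ennreal ((cmod (u t))\<^sup>2) * indicator torus_cube t \<partial>lborel) < \<infinity>"
    by (auto simp: nn_integral_restrict_space top.not_eq_extremum)
  have "emeasure lborel (torus_cube::(real^'n) set) < \<infinity>"
    unfolding torus_cube_def by (rule emeasure_lborel_cbox_finite)
  then have volume: "(\<integral>\<^sup>+t. indicator torus_cube (t::real^'n) \<partial>lborel) < \<infinity>"
    by simp
  have "(\<integral>\<^sup>+t. ennreal (norm (u t)) * indicator fundamental_cell t \<partial>lborel)
      \<le> (\<integral>\<^sup>+t. indicator torus_cube t + ennreal ((cmod (u t))\<^sup>2) * indicator torus_cube t \<partial>lborel)"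
  proof (rule nn_integral_mono)
    fix t :: "real^'n"
    have "norm (u t) \<le> 1 + (cmod (u t))\<^sup>2"
      using zero_le_power2[of "norm (u t) - 1/2"] by (simp add: power2_eq_square algebra_simps)
    then have "ennreal (norm (u t)) \<le> 1 + ennreal ((cmod (u t))\<^sup>2)"
      by (metis ennreal_leI ennreal_plus ennreal_1 zero_le_one zero_le_power2)
    moreover have "fundamental_cell \<subseteq> torus_cube"
      by (auto simp: fundamental_cell_def torus_cube_def mem_box_cart less_imp_le)
    ultimately show "ennreal (norm (u t)) * indicator fundamental_cell t
        \<le> indicator torus_cube t + ennreal ((cmod (u t))\<^sup>2) * indicator torus_cube t"
      by (auto split: split_indicator)
  qed
  also have "\<dots> = (\<integral>\<^sup>+t. indicator torus_cube (t::real^'n) \<partial>lborel)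
      + (\<integral>\<^sup>+t. ennreal ((cmod (u t))\<^sup>2) * indicator torus_cube t \<partial>lborel)"
    by (rule nn_integral_add) auto
  also have "\<dots> < \<infinity>"
    using square volume by simp
  finally show ?thesis .
qed

text \<open>A Gaussian is dominated on a lattice cell by its cell average with half the decay rate;
  summing over the cells turns \<open>\<integral> exp(-\<beta>|y|\<^sup>2) |u y| dy\<close> into
  (cell integral of \<open>|u|\<close>) \<open>\<times>\<close> (integral of a Gaussian).\<close>

lemma gaussian_le_cell_average:
  fixes t c :: "real^'n::finite"
  assumes "\<beta> > 0" "t \<in> fundamental_cell"
  shows "emeasure lborel (fundamental_cell :: (real^'n) set) * ennreal (exp (- \<beta> * (norm (t + c))\<^sup>2))
    \<le> ennreal (exp (\<beta> * (CARD('n) * (2*pi))\<^sup>2)) *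
       (\<integral>\<^sup>+t'. ennreal (exp (- (\<beta>/2) * (norm (t' + c))\<^sup>2)) * indicator fundamental_cell t' \<partial>lborel)"
    (is "?V * _ \<le> ?E * _")
proof -
  have "?V * ennreal (exp (- \<beta> * (norm (t + c))\<^sup>2))
      = (\<integral>\<^sup>+t'. ennreal (exp (- \<beta> * (norm (t + c))\<^sup>2)) * indicator fundamental_cell (t' :: real^'n) \<partial>lborel)"
    by (subst nn_integral_cmult_indicator) (auto simp: mult.commute)
  also have "\<dots> \<le> (\<integral>\<^sup>+t'. ?E * (ennreal (exp (- (\<beta>/2) * (norm (t' + c))\<^sup>2)) * indicator fundamental_cell t') \<partial>lborel)"
  proof (intro nn_integral_mono)
    fix t'
    show "ennreal (exp (- \<beta> * (norm (t + c))\<^sup>2)) * indicator fundamental_cell t'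
        \<le> ?E * (ennreal (exp (- (\<beta>/2) * (norm (t' + c))\<^sup>2)) * indicator fundamental_cell t')"
    proof (cases "t' \<in> fundamental_cell")
      case True
      then have "norm ((t' + c) - (t + c)) \<le> CARD('n) * (2*pi)"
        using norm_diff_fundamental_cell_le[OF assms(2)] by simp
      from gaussian_le_translate[OF assms(1) this] True show ?thesis
        by (simp add: ennreal_mult[symmetric] ennreal_leI)
    qed simp
  qed
  also have "\<dots> = ?E * (\<integral>\<^sup>+t'. ennreal (exp (- (\<beta>/2) * (norm (t' + c))\<^sup>2)) * indicator fundamental_cell t' \<partial>lborel)"
    by (rule nn_integral_cmult) measurable
  finally show ?thesis .
qed

lemma integrable_gaussian_mult_L2_torus:
  fixes u :: "real^'n::finite \<Rightarrow> complex"
  assumes u: "u \<in> L2_torus" and \<beta>: "\<beta> > 0"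
  shows "integrable lborel (\<lambda>y. exp (- \<beta> * (norm y)\<^sup>2) * norm (u y))"
proof -
  have periodic: "torus_periodic u" and [measurable]: "u \<in> borel_measurable borel"
    using u by (simp_all add: L2_torus_def)
  define g where "g c y = ennreal (exp (- c * (norm (y::real^'n))\<^sup>2))" for c y
  define V where "V = emeasure lborel (fundamental_cell :: (real^'n) set)"
  define E where "E = ennreal (exp (\<beta> * (CARD('n) * (2*pi))\<^sup>2))"
  define H where "H k = (\<integral>\<^sup>+t'. g (\<beta>/2) (t' + lattice_point k) * indicator fundamental_cell t' \<partial>lborel)" for k
  define U where "U = (\<integral>\<^sup>+t. ennreal (norm (u t)) * indicator fundamental_cell t \<partial>lborel)"
  have [measurable]: "g c \<in> borel_measurable borel" for c
    unfolding g_def by measurable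
  have cell: "V * g \<beta> (t + lattice_point k) \<le> E * H k" if "t \<in> fundamental_cell" for t k
    using gaussian_le_cell_average[OF \<beta> that] by (simp add: V_def E_def H_def g_def)
  have "V * (\<integral>\<^sup>+y. g \<beta> y * ennreal (norm (u y)) \<partial>lborel)
      = V * (\<integral>\<^sup>+k. (\<integral>\<^sup>+t. g \<beta> (t + lattice_point k) * (ennreal (norm (u t)) * indicator fundamental_cell t) \<partial>lborel) \<partial>count_space UNIV)"
    by (subst nn_integral_lattice_tiling) (simp_all add: torus_periodic_lattice_point[OF periodic] mult.assoc)
  also have "\<dots> = (\<integral>\<^sup>+k. (\<integral>\<^sup>+t. (V * g \<beta> (t + lattice_point k)) * (ennreal (norm (u t)) * indicator fundamental_cell t) \<partial>lborel) \<partial>count_space UNIV)"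
    by (simp add: nn_integral_cmult[symmetric] mult.assoc)
  also have "\<dots> \<le> (\<integral>\<^sup>+k. (\<integral>\<^sup>+t. (E * H k) * (ennreal (norm (u t)) * indicator fundamental_cell t) \<partial>lborel) \<partial>count_space UNIV)"
    using cell by (intro nn_integral_mono) (auto intro: mult_right_mono split: split_indicator)
  also have "\<dots> = E * U * (\<integral>\<^sup>+k. H k \<partial>count_space UNIV)"
    by (simp add: U_def nn_integral_cmult nn_integral_multc mult_ac)
  also have "(\<integral>\<^sup>+k. H k \<partial>count_space UNIV) = (\<integral>\<^sup>+y. g (\<beta>/2) y \<partial>lborel)"
    unfolding H_def by (rule nn_integral_lattice_tiling[symmetric]) measurable
  finally have le: "V * (\<integral>\<^sup>+y. g \<beta> y * ennreal (norm (u y)) \<partial>lborel) \<le> E * U * (\<integral>\<^sup>+y. g (\<beta>/2) y \<partial>lborel)" .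
  have "(\<integral>\<^sup>+y. g (\<beta>/2) y \<partial>lborel) < \<infinity>"
    unfolding g_def using nn_integral_gaussian_finite[of "\<beta>/2"] \<beta> by simp
  moreover have "U < \<infinity>"
    unfolding U_def by (rule nn_integral_norm_fundamental_cell_finite[OF u])
  ultimately have "E * U * (\<integral>\<^sup>+y. g (\<beta>/2) y \<partial>lborel) < \<infinity>"
    by (simp add: E_def ennreal_mult_less_top)
  with le have "V * (\<integral>\<^sup>+y. g \<beta> y * ennreal (norm (u y)) \<partial>lborel) < \<infinity>"
    by (rule le_less_trans)
  then have "(\<integral>\<^sup>+y. g \<beta> y * ennreal (norm (u y)) \<partial>lborel) < \<infinity>"
    using emeasure_fundamental_cell_nonzero by (auto simp: V_def ennreal_mult_less_top)
  then show ?thesis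
    by (intro integrableI_bounded) (simp_all add: g_def ennreal_mult)
qed

lemma holomorphic_derivative_bound:
  fixes f f' :: "complex \<Rightarrow> complex"
  assumes r: "r > 0"
    and deriv: "\<And>w. w \<in> ball w0 r \<Longrightarrow> (f has_field_derivative f' w) (at w)"
    and bound: "\<And>w. w \<in> ball w0 r \<Longrightarrow> norm (f w) \<le> B"
    and w: "w \<in> ball w0 (r/2)"
  shows "norm (f' w) \<le> 4 * B / r"
proof -
  have "f holomorphic_on ball w0 r"
    using deriv by (subst holomorphic_on_open) (simp, blast)
  moreover have sub: "cball w (r/4) \<subseteq> ball w0 r"
  proof
    fix x assume "x \<in> cball w (r/4)"
    then show "x \<in> ball w0 r"
      using w r dist_triangle[of w0 x w] by simp
  qed
  ultimately have "norm ((deriv ^^ 1) f w) \<le> fact 1 * B / (r/4)^1"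
    using r bound
    by (intro Cauchy_inequality)
       (auto intro: holomorphic_on_subset[OF _ order_trans[OF ball_subset_cball sub]]
                    continuous_on_subset[OF holomorphic_on_imp_continuous_on sub] simp: dist_norm)
  moreover have "deriv f w = f' w"
    using w r by (intro DERIV_imp_deriv deriv) auto
  ultimately show ?thesis
    using r by (simp add: field_simps)
qed

lemma holomorphic_difference_quotient_bound:
  fixes f f' :: "complex \<Rightarrow> complex"
  assumes r: "r > 0"
    and deriv: "\<And>w. w \<in> ball w0 r \<Longrightarrow> (f has_field_derivative f' w) (at w)"
    and bound: "\<And>w. w \<in> ball w0 r \<Longrightarrow> norm (f w) \<le> B"
    and x: "x \<in> ball w0 (r/2)"
  shows "norm ((f x - f w0) / (x - w0)) \<le> 4 * B / r"
proof (cases "x = w0")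
  case True
  have "norm (f w0) \<le> B"
    using bound r by simp
  then have "0 \<le> B"
    by (rule order_trans[OF norm_ge_zero])
  with r True show ?thesis by simp
next
  case False
  have "norm (f x - f w0) \<le> (4 * B / r) * norm (x - w0)"
  proof (rule field_differentiable_bound[of "ball w0 (r/2)"])
    fix z assume z: "z \<in> ball w0 (r/2)"
    then have "z \<in> ball w0 r"
      using r by simp
    then show "(f has_field_derivative f' z) (at z within ball w0 (r/2))"
      using deriv has_field_derivative_at_within by blast
    show "norm (f' z) \<le> 4 * B / r"
      by (rule holomorphic_derivative_bound[OF r deriv bound z])
  next
    show "w0 \<in> ball w0 (r/2)"
      using r by simp
  qed (simp, rule x)
  with False show ?thesis
    by (simp add: norm_divide divide_le_eq)
qed

lemma integrable_dominated_norm: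
  fixes f :: "'a \<Rightarrow> 'b::{banach, second_countable_topology}"
  assumes "integrable M g" "f \<in> borel_measurable M" "\<And>y. y \<in> space M \<Longrightarrow> norm (f y) \<le> g y"
  shows "integrable M f"
  using assms(3) by (intro Bochner_Integration.integrable_bound[OF assms(1,2)] AE_I2)
    (metis abs_ge_self order_trans real_norm_def)

lemma difference_quotient_LIMSEQ:
  fixes f :: "complex \<Rightarrow> complex"
  assumes "(f has_field_derivative f') (at a)" "X \<longlonglongrightarrow> a" "\<And>i. X i \<noteq> a"
  shows "(\<lambda>i. (f (X i) - f a) / (X i - a)) \<longlonglongrightarrow> f'"
proof -
  have "((\<lambda>w. (f w - f a) / (w - a)) \<longlongrightarrow> f') (at a)"
    using assms(1) by (simp add: has_field_derivative_iff)
  moreover have "filterlim X (at a) sequentially"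
    using assms(2,3) by (intro filterlim_atI) auto
  ultimately show ?thesis
    by (rule filterlim_compose)
qed

lemma borel_measurable_parameter_derivative:
  fixes K :: "complex \<Rightarrow> 'a \<Rightarrow> complex" and K' :: "'a \<Rightarrow> complex"
  assumes r: "r > 0"
    and deriv: "\<And>y. y \<in> space M \<Longrightarrow> ((\<lambda>w. K w y) has_field_derivative K' y) (at a)"
    and meas: "\<And>w. w \<in> ball a r \<Longrightarrow> K w \<in> borel_measurable M"
  shows "K' \<in> borel_measurable M"
proof -
  define \<rho> where "\<rho> i = r/2 * inverse (real (Suc i))" for i
  have \<rho>: "0 < \<rho> i" "\<rho> i \<le> r/2 * 1" for i
    using r unfolding \<rho>_def by (auto intro!: mult_left_mono simp: inverse_le_1_iff)
  have X: "a + of_real (\<rho> i) \<in> ball a r" "a + of_real (\<rho> i) \<noteq> a" for i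
    using r \<rho>[of i] by (auto simp: dist_norm)
  have "\<rho> \<longlonglongrightarrow> 0"
    unfolding \<rho>_def by (intro tendsto_mult_right_zero LIMSEQ_inverse_real_of_nat)
  from tendsto_add[OF tendsto_const[of a] tendsto_of_real[OF this]]
  have "(\<lambda>i. a + of_real (\<rho> i)) \<longlonglongrightarrow> a"
    by simp
  show ?thesis
  proof (rule borel_measurable_LIMSEQ_metric)
    show "(\<lambda>y. (K (a + of_real (\<rho> i)) y - K a y) / (a + of_real (\<rho> i) - a)) \<in> borel_measurable M" for i
      by (intro borel_measurable_divide borel_measurable_diff meas X(1) borel_measurable_const)
        (use r in simp)
    show "(\<lambda>i. (K (a + of_real (\<rho> i)) y - K a y) / (a + of_real (\<rho> i) - a)) \<longlonglongrightarrow> K' y"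
      if "y \<in> space M" for y
      by (rule difference_quotient_LIMSEQ[OF deriv[OF that] \<open>_ \<longlonglongrightarrow> a\<close> X(2)])
  qed
qed

text \<open>Holomorphy in the parameter passes to the integral under a uniform integrable bound
  on the integrand alone: Cauchy's estimate then dominates the difference quotients.\<close>

lemma has_field_derivative_parameter_integral:
  fixes K K' :: "complex \<Rightarrow> 'a \<Rightarrow> complex" and g :: "'a \<Rightarrow> real"
  assumes r: "r > 0"
    and deriv: "\<And>y w. y \<in> space M \<Longrightarrow> w \<in> ball a r \<Longrightarrow> ((\<lambda>w. K w y) has_field_derivative K' w y) (at w)"
    and meas: "\<And>w. w \<in> ball a r \<Longrightarrow> K w \<in> borel_measurable M"
    and g: "integrable M g"
    and bound: "\<And>y w. y \<in> space M \<Longrightarrow> w \<in> ball a r \<Longrightarrow> norm (K w y) \<le> g y"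
  shows "integrable M (K' a)"
    and "((\<lambda>w. \<integral>y. K w y \<partial>M) has_field_derivative (\<integral>y. K' a y \<partial>M)) (at a)"
proof -
  have a: "a \<in> ball a r" "a \<in> ball a (r/2)"
    using r by simp_all
  have half: "w \<in> ball a r" if "w \<in> ball a (r/2)" for w
    using that r by auto
  have K'_meas: "K' a \<in> borel_measurable M"
    using deriv[OF _ a(1)] by (rule borel_measurable_parameter_derivative[OF r _ meas])
  have g4: "integrable M (\<lambda>y. 4 * g y / r)"
    using g by simp
  show "integrable M (K' a)"
  proof (rule integrable_dominated_norm[OF g4 K'_meas])
    fix y assume "y \<in> space M"
    show "norm (K' a y) \<le> 4 * g y / r"
      by (rule holomorphic_derivative_bound[OF r deriv bound a(2)]) (use \<open>y \<in> space M\<close> in simp_all)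
  qed
  define Q where "Q w y = (K w y - K a y) / (w - a)" for w y
  have "((\<lambda>w. ((\<integral>y. K w y \<partial>M) - (\<integral>y. K a y \<partial>M)) / (w - a)) \<longlongrightarrow> (\<integral>y. K' a y \<partial>M))
      (at a within ball a (r/2))"
  proof (subst tendsto_at_iff_sequentially, intro allI impI)
    fix Y :: "nat \<Rightarrow> complex"
    assume Y: "\<forall>i. Y i \<in> ball a (r / 2) - {a}" "Y \<longlonglongrightarrow> a"
    have integrable_K: "integrable M (K w)" if "w \<in> ball a r" for w
      using bound[OF _ that] by (rule integrable_dominated_norm[OF g meas[OF that]])
    have "Y i \<in> ball a r" for i
      using Y(1) half by blast
    then have "((\<integral>y. K (Y i) y \<partial>M) - (\<integral>y. K a y \<partial>M)) / (Y i - a) = (\<integral>y. Q (Y i) y \<partial>M)" for i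
      using integrable_K a(1) by (simp add: Q_def)
    moreover have "(\<lambda>i. \<integral>y. Q (Y i) y \<partial>M) \<longlonglongrightarrow> (\<integral>y. K' a y \<partial>M)"
    proof (rule integral_dominated_convergence[OF K'_meas _ g4])
      show "Q (Y i) \<in> borel_measurable M" for i
        unfolding Q_def
        by (intro borel_measurable_divide borel_measurable_diff meas borel_measurable_const a(1))
          (use \<open>Y i \<in> ball a r\<close> in simp)
      show "AE y in M. (\<lambda>i. Q (Y i) y) \<longlonglongrightarrow> K' a y"
        unfolding Q_def using Y by (intro AE_I2 difference_quotient_LIMSEQ deriv a(1)) auto
      show "AE y in M. norm (Q (Y i) y) \<le> 4 * g y / r" for i
        unfolding Q_def using Y(1)
        by (intro AE_I2 holomorphic_difference_quotient_bound[OF r deriv bound]) auto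
    qed
    ultimately show "((\<lambda>w. ((\<integral>y. K w y \<partial>M) - (\<integral>y. K a y \<partial>M)) / (w - a)) \<circ> Y)
        \<longlonglongrightarrow> (\<integral>y. K' a y \<partial>M)"
      by (simp add: comp_def)
  qed
  moreover have "at a within ball a (r/2) = at a"
    using r by (intro at_within_open) auto
  ultimately show "((\<lambda>w. \<integral>y. K w y \<partial>M) has_field_derivative (\<integral>y. K' a y \<partial>M)) (at a)"
    by (simp add: has_field_derivative_iff)
qed

text \<open>The principal square root in \<^const>\<open>jap\<close> is holomorphic with positive real part
  exactly where \<open>1 + \<Sum> \<zeta>\<^sub>j\<^sup>2\<close> stays off the cut \<open>]-\<infinity>, 0]\<close>; we work on the half-plane part of that region.\<close>

definition jap_domain :: "(complex^'n::finite) set" where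
  "jap_domain = {\<zeta>. 0 < Re (1 + (\<Sum>j\<in>UNIV. (\<zeta>$j)\<^sup>2))}"

lemma open_jap_domain: "open (jap_domain :: (complex^'n::finite) set)"
  unfolding jap_domain_def by (intro open_Collect_less continuous_intros)

lemma Re_csqrt_pos:
  assumes "0 < Re w"
  shows "0 < Re (csqrt w)"
proof -
  have "Re (csqrt w) \<noteq> 0"
  proof
    assume "Re (csqrt w) = 0"
    then have "Re w = - (Im (csqrt w))\<^sup>2"
      using power2_csqrt[of w] by (metis Re_power2 power2_eq_square diff_0 mult_zero_left)
    then show False
      using assms by (smt (verit) zero_le_power2)
  qed
  then show ?thesis
    using Re_csqrt[of w] by linarith
qed

lemma Re_jap_pos: "\<zeta> \<in> jap_domain \<Longrightarrow> 0 < Re (jap \<zeta>)"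
  unfolding jap_def jap_domain_def by (intro Re_csqrt_pos) simp

lemma jap_nonzero: "\<zeta> \<in> jap_domain \<Longrightarrow> jap \<zeta> \<noteq> 0"
  using Re_jap_pos by fastforce

lemma isCont_jap:
  assumes "\<zeta> \<in> jap_domain"
  shows "isCont jap \<zeta>"
proof -
  have "isCont (\<lambda>\<zeta>. 1 + (\<Sum>j\<in>UNIV. (\<zeta>$j)\<^sup>2)) \<zeta>"
    by (intro continuous_intros)
  moreover have "isCont csqrt (1 + (\<Sum>j\<in>UNIV. (\<zeta>$j)\<^sup>2))"
    using assms by (intro continuous_at_csqrt) (auto simp: jap_domain_def complex_nonpos_Reals_iff)
  ultimately show ?thesis
    unfolding jap_def by (rule isCont_o2)
qed

lemma jap_locally_bounded:
  assumes "\<zeta>0 \<in> jap_domain"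
  shows "\<exists>r>0. \<exists>\<alpha>>0. \<forall>\<zeta>. norm (\<zeta> - \<zeta>0) < r \<longrightarrow>
           \<zeta> \<in> jap_domain \<and> norm (jap \<zeta>) \<le> norm (jap \<zeta>0) + 1 \<and> \<alpha> \<le> Re (jap \<zeta>)"
proof -
  define \<alpha> where "\<alpha> = Re (jap \<zeta>0) / 2"
  have \<alpha>: "\<alpha> > 0"
    using Re_jap_pos[OF assms] by (simp add: \<alpha>_def)
  obtain r1 where r1: "r1 > 0" "\<And>\<zeta>. norm (\<zeta> - \<zeta>0) < r1 \<Longrightarrow> norm (jap \<zeta> - jap \<zeta>0) < min 1 \<alpha>"
    using isCont_jap[OF assms, unfolded continuous_at_eps_delta, rule_format, of "min 1 \<alpha>"] \<alpha>
    by (auto simp: dist_norm)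
  obtain r2 where r2: "r2 > 0" "ball \<zeta>0 r2 \<subseteq> jap_domain"
    using open_jap_domain assms open_contains_ball by blast
  have "\<zeta> \<in> jap_domain \<and> norm (jap \<zeta>) \<le> norm (jap \<zeta>0) + 1 \<and> \<alpha> \<le> Re (jap \<zeta>)"
    if "norm (\<zeta> - \<zeta>0) < min r1 r2" for \<zeta>
  proof (intro conjI)
    show "\<zeta> \<in> jap_domain"
      using that r2 by (auto simp: dist_norm norm_minus_commute)
    have close: "norm (jap \<zeta> - jap \<zeta>0) < min 1 \<alpha>"
      using that r1 by simp
    then show "norm (jap \<zeta>) \<le> norm (jap \<zeta>0) + 1"
      using norm_triangle_ineq2[of "jap \<zeta>" "jap \<zeta>0"] by linarith
    show "\<alpha> \<le> Re (jap \<zeta>)"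
      using close abs_Re_le_cmod[of "jap \<zeta> - jap \<zeta>0"]
      unfolding \<alpha>_def min_less_iff_conj abs_le_iff minus_complex.sel by linarith
  qed
  then show ?thesis
    using r1 r2 \<alpha> by (intro exI[of _ "min r1 r2"] exI[of _ \<alpha>]) auto
qed

definition fbi_phase :: "real \<Rightarrow> complex^'n::finite \<Rightarrow> complex^'n \<Rightarrow> real^'n \<Rightarrow> complex" where
  "fbi_phase h z \<zeta> y = (\<i> / complex_of_real h) *
     ((\<Sum>j\<in>UNIV. (z $ j - complex_of_real (y $ j)) * \<zeta> $ j)
      + (\<i> / 2) * jap \<zeta> * (\<Sum>j\<in>UNIV. (z $ j - complex_of_real (y $ j))\<^sup>2))"

definition fbi_kernel ::
    "real \<Rightarrow> (real^'n::finite \<Rightarrow> complex) \<Rightarrow> complex^'n \<Rightarrow> complex^'n \<Rightarrow> real^'n \<Rightarrow> complex" where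
  "fbi_kernel h u z \<zeta> y = exp (fbi_phase h z \<zeta> y) * jap \<zeta> powr (complex_of_real (real CARD('n) / 4)) * u y"

lemma FBI_eq_integral_fbi_kernel:
  fixes u :: "real^'n::finite \<Rightarrow> complex"
  shows "FBI h u z \<zeta> = complex_of_real (h powr (- 3 * real CARD('n) / 4)) * (\<integral>y. fbi_kernel h u z \<zeta> y \<partial>lborel)"
  by (simp add: FBI_def fbi_kernel_def fbi_phase_def)

lemma borel_measurable_fbi_kernel:
  assumes "u \<in> L2_torus"
  shows "fbi_kernel h u z \<zeta> \<in> borel_measurable lborel"
proof -
  have [measurable]: "u \<in> borel_measurable borel"
    using assms by (simp add: L2_torus_def)
  have "continuous_on UNIV (\<lambda>y. exp (fbi_phase h z \<zeta> y))"
    unfolding fbi_phase_def by (intro continuous_intros)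
  then have [measurable]: "(\<lambda>y. exp (fbi_phase h z \<zeta> y)) \<in> borel_measurable borel"
    by (rule borel_measurable_continuous_onI)
  show ?thesis
    unfolding fbi_kernel_def by measurable
qed

lemma half_square_minus_linear_ge:
  fixes \<alpha> b v :: real
  assumes "\<alpha> > 0"
  shows "(\<alpha>/2) * v\<^sup>2 - b * \<bar>v\<bar> \<ge> (\<alpha>/4) * v\<^sup>2 - b\<^sup>2 / \<alpha>"
proof -
  have "0 \<le> (\<alpha> * \<bar>v\<bar> / 2 - b)\<^sup>2 / \<alpha>"
    using assms by simp
  also have "\<dots> = (\<alpha>/4) * v\<^sup>2 - b * \<bar>v\<bar> + b\<^sup>2 / \<alpha>"
    using assms by (simp add: field_simps power2_eq_square)
  finally show ?thesis
    by simp
qed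

lemma square_diff_ge:
  fixes p t :: real
  shows "(p - t)\<^sup>2 \<ge> t\<^sup>2/2 - p\<^sup>2"
  using zero_le_power2[of "t - 2*p"] by (simp add: power2_eq_square algebra_simps)

text \<open>With \<open>z\<^sub>j = p + i q\<close>, \<open>\<zeta>\<^sub>j = s + i \<sigma>\<close>, \<open>jap \<zeta> = A + i B\<close> and \<open>y\<^sub>j = t\<close>, the left-hand side
  is the \<open>j\<close>-th summand of \<open>-h Re (fbi_phase h z \<zeta> y)\<close>.\<close>

lemma quadratic_phase_lower_bound:
  fixes p q s \<sigma> A B t \<alpha> M :: real
  assumes \<alpha>: "\<alpha> > 0" "A \<ge> \<alpha>"
    and bounds: "\<bar>p\<bar> \<le> M" "\<bar>q\<bar> \<le> M" "\<bar>s\<bar> \<le> M" "\<bar>\<sigma>\<bar> \<le> M" "\<bar>A\<bar> \<le> M" "\<bar>B\<bar> \<le> M"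
  shows "(p - t) * \<sigma> + q * s + (A/2) * ((p - t)\<^sup>2 - q\<^sup>2) - B * (p - t) * q
          \<ge> (\<alpha>/8) * t\<^sup>2 - ((M + M\<^sup>2)\<^sup>2 / \<alpha> + M\<^sup>2 + M^3/2 + \<alpha> * M\<^sup>2 / 4)"
proof -
  define v where "v = p - t"
  define b where "b = M + M\<^sup>2"
  have M: "0 \<le> M"
    using bounds(1) by linarith
  have linear: "v * \<sigma> - B * v * q \<ge> - (b * \<bar>v\<bar>)"
  proof -
    have "\<bar>v * \<sigma>\<bar> \<le> \<bar>v\<bar> * M"
      using bounds(4) by (simp add: abs_mult mult_left_mono)
    moreover have "\<bar>B * v * q\<bar> = \<bar>v\<bar> * (\<bar>B\<bar> * \<bar>q\<bar>)"
      by (simp add: abs_mult)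
    moreover have "\<dots> \<le> \<bar>v\<bar> * (M * M)"
      using bounds(2,6) M by (intro mult_left_mono mult_mono) auto
    moreover have "b * \<bar>v\<bar> = \<bar>v\<bar> * M + \<bar>v\<bar> * (M * M)"
      by (simp add: b_def power2_eq_square algebra_simps)
    ultimately show ?thesis
      by (simp only: abs_le_iff) linarith
  qed
  have bounded_terms: "q * s - (A/2) * q\<^sup>2 \<ge> - (M\<^sup>2 + M^3/2)"
  proof -
    have "\<bar>q * s\<bar> \<le> M * M"
      using bounds(2,3) M by (simp add: abs_mult mult_mono)
    moreover have "q\<^sup>2 \<le> M\<^sup>2"
      using power_mono[OF bounds(2) abs_ge_zero, of 2] by simp
    moreover from this have "A * q\<^sup>2 \<le> M * M\<^sup>2"
      using bounds(5) M by (intro mult_mono) auto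
    ultimately show ?thesis
      by (simp add: power2_eq_square power3_eq_cube abs_le_iff)
  qed
  have shift: "(\<alpha>/4) * v\<^sup>2 \<ge> (\<alpha>/8) * t\<^sup>2 - \<alpha> * M\<^sup>2 / 4"
  proof -
    have "p\<^sup>2 \<le> M\<^sup>2"
      using power_mono[OF bounds(1) abs_ge_zero, of 2] by simp
    moreover have "v\<^sup>2 \<ge> t\<^sup>2/2 - p\<^sup>2"
      unfolding v_def by (rule square_diff_ge)
    ultimately have "(\<alpha>/4) * (t\<^sup>2/2 - M\<^sup>2) \<le> (\<alpha>/4) * v\<^sup>2"
      using \<alpha> by (intro mult_left_mono) auto
    then show ?thesis
      by (simp add: algebra_simps)
  qed
  have "(A/2) * v\<^sup>2 \<ge> (\<alpha>/2) * v\<^sup>2"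
    using \<alpha> by (intro mult_right_mono) auto
  then show ?thesis
    using linear bounded_terms half_square_minus_linear_ge[OF \<alpha>(1), of v b] shift unfolding v_def b_def
    by (simp add: algebra_simps)
qed


lemma Re_fbi_phase:
  "Re (fbi_phase h z \<zeta> y) = - (\<Sum>j\<in>UNIV.
      (Re (z$j) - y$j) * Im (\<zeta>$j) + Im (z$j) * Re (\<zeta>$j)
      + (Re (jap \<zeta>) / 2) * ((Re (z$j) - y$j)\<^sup>2 - (Im (z$j))\<^sup>2)
      - Im (jap \<zeta>) * (Re (z$j) - y$j) * Im (z$j)) / h"
proof -
  have coordinate: "Im ((w - complex_of_real t) * c) + Re (J * (w - complex_of_real t)\<^sup>2) / 2
      = (Re w - t) * Im c + Im w * Re c + (Re J / 2) * ((Re w - t)\<^sup>2 - (Im w)\<^sup>2) - Im J * (Re w - t) * Im w"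
    for w c J :: complex and t :: real
  proof -
    have "Re (J * (w - complex_of_real t)\<^sup>2) = Re J * ((Re w - t)\<^sup>2 - (Im w)\<^sup>2) - 2 * Im J * (Re w - t) * Im w"
      by (simp add: power2_eq_square algebra_simps)
    moreover have "Im ((w - complex_of_real t) * c) = (Re w - t) * Im c + Im w * Re c"
      by (simp add: algebra_simps)
    ultimately show ?thesis
      by (simp add: diff_divide_distrib)
  qed
  have Re_i_div: "Re ((\<i> / complex_of_real h) * X) = - Im X / h" for X
    by (cases "h = 0") (simp_all add: Re_divide Im_divide field_simps power2_eq_square)
  have Im_add: "Im (A + (\<i> / 2) * J * B) = Im A + Re (J * B) / 2" for A J B
    by (simp add: algebra_simps)
  have "Re (fbi_phase h z \<zeta> y) = - (\<Sum>j\<in>UNIV. Im ((z$j - complex_of_real (y$j)) * \<zeta>$j)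
      + Re (jap \<zeta> * (z$j - complex_of_real (y$j))\<^sup>2) / 2) / h"
    unfolding fbi_phase_def Re_i_div Im_add
    by (simp add: sum.distrib sum_distrib_left sum_divide_distrib)
  then show ?thesis
    by (simp only: coordinate)
qed

lemma Re_fbi_phase_le:
  fixes M \<alpha> h :: real
  assumes \<alpha>: "\<alpha> > 0" and h: "h > 0"
  shows "\<exists>c. \<forall>(z::complex^'n::finite) \<zeta> y. norm z \<le> M \<longrightarrow> norm \<zeta> \<le> M \<longrightarrow> norm (jap \<zeta>) \<le> M \<longrightarrow>
           \<alpha> \<le> Re (jap \<zeta>) \<longrightarrow> Re (fbi_phase h z \<zeta> y) \<le> c - \<alpha> / (8 * h) * (norm y)\<^sup>2"
proof (intro exI allI impI)
  define c where "c = (M + M\<^sup>2)\<^sup>2 / \<alpha> + M\<^sup>2 + M^3/2 + \<alpha> * M\<^sup>2 / 4"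
  fix z \<zeta> :: "complex^'n" and y :: "real^'n"
  assume z: "norm z \<le> M" and \<zeta>: "norm \<zeta> \<le> M" and J: "norm (jap \<zeta>) \<le> M" "\<alpha> \<le> Re (jap \<zeta>)"
  have "(\<alpha>/8) * (y$j)\<^sup>2 - c \<le> (Re (z$j) - y$j) * Im (\<zeta>$j) + Im (z$j) * Re (\<zeta>$j)
      + (Re (jap \<zeta>) / 2) * ((Re (z$j) - y$j)\<^sup>2 - (Im (z$j))\<^sup>2) - Im (jap \<zeta>) * (Re (z$j) - y$j) * Im (z$j)"
    for j
  proof -
    have "norm (z$j) \<le> M" "norm (\<zeta>$j) \<le> M"
      using z \<zeta> Finite_Cartesian_Product.norm_nth_le[of z j] Finite_Cartesian_Product.norm_nth_le[of \<zeta> j]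
      by linarith+
    then have "\<bar>Re (z$j)\<bar> \<le> M" "\<bar>Im (z$j)\<bar> \<le> M" "\<bar>Re (\<zeta>$j)\<bar> \<le> M" "\<bar>Im (\<zeta>$j)\<bar> \<le> M"
        "\<bar>Re (jap \<zeta>)\<bar> \<le> M" "\<bar>Im (jap \<zeta>)\<bar> \<le> M"
      using J(1) abs_Re_le_cmod[of "z$j"] abs_Im_le_cmod[of "z$j"] abs_Re_le_cmod[of "\<zeta>$j"]
        abs_Im_le_cmod[of "\<zeta>$j"] abs_Re_le_cmod[of "jap \<zeta>"] abs_Im_le_cmod[of "jap \<zeta>"]
      by linarith+
    from quadratic_phase_lower_bound[OF \<alpha> J(2) this] show ?thesis
      by (simp add: c_def)
  qed
  then have "(\<Sum>j\<in>UNIV. (\<alpha>/8) * (y$j)\<^sup>2 - c) \<le> (\<Sum>j\<in>UNIV. (Re (z$j) - y$j) * Im (\<zeta>$j) + Im (z$j) * Re (\<zeta>$j)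
      + (Re (jap \<zeta>) / 2) * ((Re (z$j) - y$j)\<^sup>2 - (Im (z$j))\<^sup>2) - Im (jap \<zeta>) * (Re (z$j) - y$j) * Im (z$j))"
    by (rule sum_mono)
  moreover have "(\<Sum>j\<in>UNIV. (\<alpha>/8) * (y$j)\<^sup>2 - c) = (\<alpha>/8) * (norm y)\<^sup>2 - CARD('n) * c"
    by (simp add: sum_subtractf sum_distrib_left norm_vec_def L2_set_def sum_nonneg)
  ultimately show "Re (fbi_phase h z \<zeta> y) \<le> CARD('n) * c / h - \<alpha> / (8 * h) * (norm y)\<^sup>2"
    using h unfolding Re_fbi_phase by (simp add: field_simps)
qed

lemma one_plus_mult_gaussian_le:
  fixes \<beta> t :: real
  assumes \<beta>: "\<beta> > 0"
  shows "(1 + t) * exp (- \<beta> * t\<^sup>2) \<le> exp (1 / (2*\<beta>)) * exp (- (\<beta>/2) * t\<^sup>2)"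
proof -
  have "0 \<le> (\<beta> * t - 1)\<^sup>2 / (2*\<beta>)"
    using \<beta> by simp
  also have "\<dots> = (\<beta>/2) * t\<^sup>2 - t + 1/(2*\<beta>)"
    using \<beta> by (simp add: field_simps power2_eq_square)
  finally have "1 + t \<le> exp ((\<beta>/2) * t\<^sup>2 + 1/(2*\<beta>))"
    using exp_ge_add_one_self[of t] by (smt (verit) exp_le_cancel_iff)
  then have "(1 + t) * exp (- \<beta> * t\<^sup>2) \<le> exp ((\<beta>/2) * t\<^sup>2 + 1/(2*\<beta>)) * exp (- \<beta> * t\<^sup>2)"
    by (intro mult_right_mono) auto
  also have "\<dots> = exp (1 / (2*\<beta>)) * exp (- (\<beta>/2) * t\<^sup>2)"
    by (simp add: exp_add[symmetric] algebra_simps)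
  finally show ?thesis .
qed

lemma fbi_kernel_gaussian_bound:
  fixes u :: "real^'n::finite \<Rightarrow> complex" and M \<alpha> h :: real
  assumes \<alpha>: "\<alpha> > 0" and h: "h > 0"
  shows "\<exists>C \<beta>. 0 \<le> C \<and> \<beta> > 0 \<and> (\<forall>z \<zeta> y. norm z \<le> M \<longrightarrow> norm \<zeta> \<le> M \<longrightarrow> norm (jap \<zeta>) \<le> M \<longrightarrow> \<alpha> \<le> Re (jap \<zeta>) \<longrightarrow>
           (1 + norm y) * norm (fbi_kernel h u z \<zeta> y) \<le> C * (exp (- \<beta> * (norm y)\<^sup>2) * norm (u y)))"
proof -
  obtain c where c: "\<And>z \<zeta> y. norm (z::complex^'n) \<le> M \<Longrightarrow> norm \<zeta> \<le> M \<Longrightarrow> norm (jap \<zeta>) \<le> M \<Longrightarrow>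
      \<alpha> \<le> Re (jap \<zeta>) \<Longrightarrow> Re (fbi_phase h z \<zeta> y) \<le> c - \<alpha> / (8 * h) * (norm y)\<^sup>2"
    using Re_fbi_phase_le[OF \<alpha> h, of M] by blast
  define \<beta> where "\<beta> = \<alpha> / (8 * h)"
  have \<beta>: "\<beta> > 0"
    using \<alpha> h by (simp add: \<beta>_def)
  define C where "C = exp c * M powr (real CARD('n) / 4) * exp (1 / (2*\<beta>))"
  have "(1 + norm y) * norm (fbi_kernel h u z \<zeta> y) \<le> C * (exp (- (\<beta>/2) * (norm y)\<^sup>2) * norm (u y))"
    if bounds: "norm z \<le> M" "norm \<zeta> \<le> M" "norm (jap \<zeta>) \<le> M" "\<alpha> \<le> Re (jap \<zeta>)" for z \<zeta> y
  proof -
    have phase: "norm (exp (fbi_phase h z \<zeta> y)) \<le> exp c * exp (- \<beta> * (norm y)\<^sup>2)"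
      using c[OF bounds] by (simp add: \<beta>_def exp_add[symmetric])
    have power: "norm (jap \<zeta> powr complex_of_real (real CARD('n) / 4)) \<le> M powr (real CARD('n) / 4)"
      using bounds(3) by (simp add: norm_powr_real_powr' powr_mono2)
    have "(1 + norm y) * norm (fbi_kernel h u z \<zeta> y)
        = ((1 + norm y) * norm (exp (fbi_phase h z \<zeta> y))) * norm (jap \<zeta> powr complex_of_real (real CARD('n) / 4)) * norm (u y)"
      by (simp add: fbi_kernel_def norm_mult mult_ac)
    also have "\<dots> \<le> ((1 + norm y) * (exp c * exp (- \<beta> * (norm y)\<^sup>2))) * M powr (real CARD('n) / 4) * norm (u y)"
      by (intro mult_right_mono mult_mono phase power mult_left_mono) auto
    also have "\<dots> = exp c * M powr (real CARD('n) / 4) * (((1 + norm y) * exp (- \<beta> * (norm y)\<^sup>2)) * norm (u y))"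
      by (simp add: mult_ac)
    also have "\<dots> \<le> exp c * M powr (real CARD('n) / 4) * ((exp (1 / (2*\<beta>)) * exp (- (\<beta>/2) * (norm y)\<^sup>2)) * norm (u y))"
      by (intro mult_left_mono mult_right_mono one_plus_mult_gaussian_le \<beta>) auto
    finally show ?thesis
      by (simp add: C_def mult_ac)
  qed
  moreover have "0 \<le> C" "\<beta>/2 > 0"
    using \<beta> by (simp_all add: C_def)
  ultimately show ?thesis
    by blast
qed


lemma cvec_upd_nth: "cvec_upd v j w $ k = (if k = j then w else v $ k)"
  by (simp add: cvec_upd_def)

lemma cvec_upd_same: "cvec_upd v j (v $ j) = v"
  by (simp add: cvec_upd_def vec_eq_iff)

lemma sum_cvec_upd:
  "(\<Sum>k\<in>UNIV. f k (cvec_upd v j w $ k)) = f j w + (\<Sum>k\<in>UNIV - {j}. f k (v $ k))"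
proof -
  have "(\<Sum>k\<in>UNIV. f k (cvec_upd v j w $ k)) = f j (cvec_upd v j w $ j) + (\<Sum>k\<in>UNIV - {j}. f k (cvec_upd v j w $ k))"
    by (rule sum.remove) auto
  also have "(\<Sum>k\<in>UNIV - {j}. f k (cvec_upd v j w $ k)) = (\<Sum>k\<in>UNIV - {j}. f k (v $ k))"
    by (rule sum.cong) (auto simp: cvec_upd_nth)
  finally show ?thesis
    by (simp add: cvec_upd_nth)
qed

lemma norm_cvec_upd_diff_less:
  fixes v :: "complex^'n::finite"
  assumes "w \<in> ball (v $ j) r"
  shows "norm (cvec_upd v j w - v) < r"
proof -
  have "norm (cvec_upd v j w - v) \<le> (\<Sum>k\<in>UNIV. norm ((cvec_upd v j w - v) $ k))"
    unfolding norm_vec_def by (rule L2_set_le_sum) simp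
  also have "\<dots> = (\<Sum>k\<in>UNIV. if k = j then norm (w - v $ j) else 0)"
    by (rule sum.cong) (auto simp: cvec_upd_nth)
  also have "\<dots> = norm (w - v $ j)"
    by simp
  finally show ?thesis
    using assms by (simp add: dist_norm norm_minus_commute)
qed

definition fbi_kernel_dz ::
    "real \<Rightarrow> (real^'n::finite \<Rightarrow> complex) \<Rightarrow> 'n \<Rightarrow> complex^'n \<Rightarrow> complex^'n \<Rightarrow> real^'n \<Rightarrow> complex" where
  "fbi_kernel_dz h u j z \<zeta> y =
     (\<i> / complex_of_real h) * (\<zeta>$j + \<i> * jap \<zeta> * (z$j - complex_of_real (y$j))) * fbi_kernel h u z \<zeta> y"

definition fbi_kernel_Aop ::
    "real \<Rightarrow> (real^'n::finite \<Rightarrow> complex) \<Rightarrow> 'n \<Rightarrow> complex^'n \<Rightarrow> complex^'n \<Rightarrow> real^'n \<Rightarrow> complex" where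
  "fbi_kernel_Aop h u k z \<zeta> y = \<i> * jap \<zeta> * (z$k - complex_of_real (y$k)) * fbi_kernel h u z \<zeta> y"

definition fbi_kernel_dz_Aop ::
    "real \<Rightarrow> (real^'n::finite \<Rightarrow> complex) \<Rightarrow> 'n \<Rightarrow> complex^'n \<Rightarrow> complex^'n \<Rightarrow> real^'n \<Rightarrow> complex" where
  "fbi_kernel_dz_Aop h u k z \<zeta> y =
     \<i> * jap \<zeta> * fbi_kernel h u z \<zeta> y + \<i> * jap \<zeta> * (z$k - complex_of_real (y$k)) * fbi_kernel_dz h u k z \<zeta> y"

definition fbi_kernel_dzeta ::
    "real \<Rightarrow> (real^'n::finite \<Rightarrow> complex) \<Rightarrow> 'n \<Rightarrow> complex^'n \<Rightarrow> complex^'n \<Rightarrow> real^'n \<Rightarrow> complex" where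
  "fbi_kernel_dzeta h u j z \<zeta> y =
     ((\<i> / complex_of_real h) * ((z$j - complex_of_real (y$j))
        + (\<i>/2) * (\<zeta>$j / jap \<zeta>) * (\<Sum>k\<in>UNIV. (z$k - complex_of_real (y$k))\<^sup>2))
      + complex_of_real (real CARD('n) / 4) * \<zeta>$j / (jap \<zeta>)\<^sup>2) * fbi_kernel h u z \<zeta> y"

lemma fbi_kernel_Aop_eq:
  assumes "h \<noteq> 0"
  shows "fbi_kernel_Aop h u k z \<zeta> y =
    complex_of_real h * (- \<i>) * fbi_kernel_dz h u k z \<zeta> y - \<zeta>$k * fbi_kernel h u z \<zeta> y"
  using assms by (simp add: fbi_kernel_Aop_def fbi_kernel_dz_def field_simps)

lemma has_field_derivative_fbi_kernel_z:
  fixes u :: "real^'n::finite \<Rightarrow> complex"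
  assumes "h \<noteq> 0"
  shows "((\<lambda>w. fbi_kernel h u (cvec_upd z j w) \<zeta> y) has_field_derivative
           fbi_kernel_dz h u j (cvec_upd z j w0) \<zeta> y) (at w0)"
proof -
  define A where "A = (\<Sum>k\<in>UNIV - {j}. (z $ k - complex_of_real (y $ k)) * \<zeta> $ k)"
  define B where "B = (\<Sum>k\<in>UNIV - {j}. (z $ k - complex_of_real (y $ k))\<^sup>2)"
  define P where "P = jap \<zeta> powr (complex_of_real (real CARD('n) / 4)) * u y"
  define \<phi> where "\<phi> w = (\<i> / complex_of_real h) * (((w - complex_of_real (y$j)) * \<zeta>$j + A)
       + (\<i> / 2) * jap \<zeta> * ((w - complex_of_real (y$j))\<^sup>2 + B))" for w
  have K: "fbi_kernel h u (cvec_upd z j w) \<zeta> y = exp (\<phi> w) * P" for w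
    using sum_cvec_upd[of "\<lambda>k v. (v - complex_of_real (y $ k)) * \<zeta> $ k" z j w]
      sum_cvec_upd[of "\<lambda>k v. (v - complex_of_real (y $ k))\<^sup>2" z j w]
    by (simp add: fbi_kernel_def fbi_phase_def \<phi>_def A_def B_def P_def mult.assoc)
  have "((\<lambda>w. exp (\<phi> w) * P) has_field_derivative
        exp (\<phi> w0) * ((\<i> / complex_of_real h) * (\<zeta>$j + (\<i> / 2) * jap \<zeta> * (2 * (w0 - complex_of_real (y$j))))) * P) (at w0)"
    unfolding \<phi>_def using assms by (auto intro!: derivative_eq_intros)
  moreover have "exp (\<phi> w0) * ((\<i> / complex_of_real h) * (\<zeta>$j + (\<i> / 2) * jap \<zeta> * (2 * (w0 - complex_of_real (y$j))))) * P
      = fbi_kernel_dz h u j (cvec_upd z j w0) \<zeta> y"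
    unfolding fbi_kernel_dz_def K by (simp add: cvec_upd_nth algebra_simps)
  ultimately show ?thesis
    unfolding K by simp
qed

lemma has_field_derivative_fbi_kernel_Aop_z:
  fixes u :: "real^'n::finite \<Rightarrow> complex"
  assumes "h \<noteq> 0"
  shows "((\<lambda>w. fbi_kernel_Aop h u k (cvec_upd z k w) \<zeta> y) has_field_derivative
           fbi_kernel_dz_Aop h u k (cvec_upd z k w0) \<zeta> y) (at w0)"
proof -
  have "((\<lambda>w. (\<i> * jap \<zeta> * (w - complex_of_real (y$k))) * fbi_kernel h u (cvec_upd z k w) \<zeta> y)
      has_field_derivative \<i> * jap \<zeta> * fbi_kernel h u (cvec_upd z k w0) \<zeta> y
        + fbi_kernel_dz h u k (cvec_upd z k w0) \<zeta> y * (\<i> * jap \<zeta> * (w0 - complex_of_real (y$k)))) (at w0)"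
    by (rule DERIV_mult[OF _ has_field_derivative_fbi_kernel_z[OF assms]])
       (auto intro!: derivative_eq_intros)
  then show ?thesis
    by (simp add: fbi_kernel_Aop_def fbi_kernel_dz_Aop_def cvec_upd_nth mult_ac)
qed

lemma has_field_derivative_jap_coordinate:
  assumes "cvec_upd \<zeta> j w0 \<in> jap_domain"
  shows "((\<lambda>w. jap (cvec_upd \<zeta> j w)) has_field_derivative w0 / jap (cvec_upd \<zeta> j w0)) (at w0)"
proof -
  define B where "B = (\<Sum>k\<in>UNIV - {j}. (\<zeta> $ k)\<^sup>2)"
  have jap_upd: "jap (cvec_upd \<zeta> j w) = csqrt (1 + (w\<^sup>2 + B))" for w
    unfolding jap_def B_def using sum_cvec_upd[of "\<lambda>k v. v\<^sup>2" \<zeta> j w] by simp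
  have "0 < Re (1 + (w0\<^sup>2 + B))"
    using assms unfolding jap_domain_def B_def mem_Collect_eq sum_cvec_upd[of "\<lambda>k v. v\<^sup>2" \<zeta> j w0] .
  then have "1 + (w0\<^sup>2 + B) \<notin> \<real>\<^sub>\<le>\<^sub>0"
    by (auto simp: complex_nonpos_Reals_iff)
  then have "((\<lambda>w. csqrt (1 + (w\<^sup>2 + B))) has_field_derivative inverse (2 * csqrt (1 + (w0\<^sup>2 + B))) * (2 * w0)) (at w0)"
    by (intro DERIV_chain2[where f = csqrt and g = "\<lambda>w. 1 + (w\<^sup>2 + B)", OF has_field_derivative_csqrt])
       (auto intro!: derivative_eq_intros)
  then show ?thesis
    unfolding jap_upd by (simp add: field_simps)
qed

lemma has_field_derivative_fbi_kernel_zeta: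
  fixes u :: "real^'n::finite \<Rightarrow> complex"
  assumes h: "h \<noteq> 0" and \<zeta>: "cvec_upd \<zeta> j w0 \<in> jap_domain"
  shows "((\<lambda>w. fbi_kernel h u z (cvec_upd \<zeta> j w) y) has_field_derivative
           fbi_kernel_dzeta h u j z (cvec_upd \<zeta> j w0) y) (at w0)"
proof -
  define A where "A = (\<Sum>k\<in>UNIV-{j}. (z$k - complex_of_real (y$k)) * \<zeta>$k)"
  define Q where "Q = (\<Sum>k\<in>UNIV. (z$k - complex_of_real (y$k))\<^sup>2)"
  define J where "J w = jap (cvec_upd \<zeta> j w)" for w
  define c where "c = complex_of_real (real CARD('n) / 4)"
  define \<phi> where "\<phi> w = (\<i> / complex_of_real h) * (((z$j - complex_of_real (y$j)) * w + A) + (\<i>/2) * J w * Q)" for w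
  have K: "fbi_kernel h u z (cvec_upd \<zeta> j w) y = exp (\<phi> w) * (J w powr c * u y)" for w
    using sum_cvec_upd[of "\<lambda>k v. (z$k - complex_of_real (y$k)) * v" \<zeta> j w]
    by (simp add: fbi_kernel_def fbi_phase_def \<phi>_def J_def c_def A_def Q_def mult.assoc)
  have dJ: "(J has_field_derivative w0 / J w0) (at w0)"
    unfolding J_def by (rule has_field_derivative_jap_coordinate[OF \<zeta>])
  have J0: "J w0 \<notin> \<real>\<^sub>\<le>\<^sub>0" "J w0 \<noteq> 0"
    using Re_jap_pos[OF \<zeta>] by (auto simp: J_def complex_nonpos_Reals_iff)
  define \<phi>' where "\<phi>' = (\<i> / complex_of_real h) * ((z$j - complex_of_real (y$j)) + (\<i>/2) * (w0 / J w0) * Q)"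
  have "(\<phi> has_field_derivative \<phi>') (at w0)"
    unfolding \<phi>_def \<phi>'_def by (rule derivative_eq_intros dJ refl | simp add: mult_ac)+
  note d_exp = DERIV_chain2[OF DERIV_exp this]
  have "((\<lambda>w. J w powr c) has_field_derivative c * J w0 powr (c - 1) * (w0 / J w0)) (at w0)"
    by (rule DERIV_chain2[OF has_field_derivative_powr[OF J0(1)] dJ])
  from DERIV_mult[OF d_exp DERIV_cmult_right[OF this]]
  have "((\<lambda>w. exp (\<phi> w) * (J w powr c * u y)) has_field_derivative
      (exp (\<phi> w0) * \<phi>') * (J w0 powr c * u y) + ((c * J w0 powr (c - 1) * (w0 / J w0)) * u y) * exp (\<phi> w0)) (at w0)" .
  moreover have "(exp (\<phi> w0) * \<phi>') * (J w0 powr c * u y) + ((c * J w0 powr (c - 1) * (w0 / J w0)) * u y) * exp (\<phi> w0)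
      = (\<phi>' + c * w0 / (J w0)\<^sup>2) * (exp (\<phi> w0) * (J w0 powr c * u y))"
    using J0(2) by (simp add: powr_diff field_simps power2_eq_square)
  moreover have "(\<phi>' + c * w0 / (J w0)\<^sup>2) * (exp (\<phi> w0) * (J w0 powr c * u y)) = fbi_kernel_dzeta h u j z (cvec_upd \<zeta> j w0) y"
    unfolding K[symmetric] by (simp add: fbi_kernel_dzeta_def \<phi>'_def c_def Q_def J_def cvec_upd_nth)
  ultimately show ?thesis
    unfolding K by simp
qed

text \<open>The left-hand side is \<open>Z\<^sub>j\<close> applied to \<open>(z, \<zeta>) \<mapsto> fbi_kernel h u z \<zeta> y\<close>, with its derivatives
  written through the kernels above.\<close>

lemma fbi_kernel_Zop_combination_eq_0:
  fixes u :: "real^'n::finite \<Rightarrow> complex"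
  assumes h: "h \<noteq> 0" and J: "jap \<zeta> \<noteq> 0"
  shows "inverse (jap \<zeta>) * fbi_kernel_Aop h u j z \<zeta> y
    + (1/2) * inverse (jap \<zeta> ^ 3) * \<zeta> $ j * (\<Sum>k\<in>UNIV.
        complex_of_real h * (- \<i>) * fbi_kernel_dz_Aop h u k z \<zeta> y - \<zeta> $ k * fbi_kernel_Aop h u k z \<zeta> y)
    - \<i> * complex_of_real h * ((- \<i>) * fbi_kernel_dzeta h u j z \<zeta> y)
    - complex_of_real (real CARD('n) / 4 * h) * inverse (jap \<zeta> ^ 2) * \<zeta> $ j * fbi_kernel h u z \<zeta> y = 0"
proof -
  define E where "E = fbi_kernel h u z \<zeta> y"
  define w where "w k = z$k - complex_of_real (y$k)" for k
  define Q where "Q = (\<Sum>k\<in>UNIV. (w k)\<^sup>2)"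
  have summand: "complex_of_real h * (- \<i>) * fbi_kernel_dz_Aop h u k z \<zeta> y - \<zeta> $ k * fbi_kernel_Aop h u k z \<zeta> y
      = (complex_of_real h * jap \<zeta> - (jap \<zeta>)\<^sup>2 * (w k)\<^sup>2) * E" for k
    using h unfolding fbi_kernel_dz_Aop_def fbi_kernel_dz_def fbi_kernel_Aop_def E_def w_def
    by (simp add: field_simps power2_eq_square)
  have sum: "(\<Sum>k\<in>UNIV. complex_of_real h * (- \<i>) * fbi_kernel_dz_Aop h u k z \<zeta> y - \<zeta> $ k * fbi_kernel_Aop h u k z \<zeta> y)
      = (of_nat CARD('n) * complex_of_real h * jap \<zeta> - (jap \<zeta>)\<^sup>2 * Q) * E"
    unfolding summand Q_def by (simp add: sum_subtractf sum_distrib_left sum_distrib_right algebra_simps)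
  have Aop: "fbi_kernel_Aop h u j z \<zeta> y = \<i> * jap \<zeta> * w j * E"
    by (simp add: fbi_kernel_Aop_def w_def E_def)
  have dzeta: "fbi_kernel_dzeta h u j z \<zeta> y = ((\<i> / complex_of_real h) * (w j + (\<i>/2) * (\<zeta>$j / jap \<zeta>) * Q)
      + complex_of_real (real CARD('n) / 4) * \<zeta>$j / (jap \<zeta>)\<^sup>2) * E"
    by (simp add: fbi_kernel_dzeta_def w_def E_def Q_def)
  define J' where "J' = jap \<zeta>"
  have "J' \<noteq> 0"
    using J by (simp add: J'_def)
  then show ?thesis
    unfolding sum Aop dzeta E_def[symmetric] J'_def[symmetric]
    using h by (simp add: field_simps power2_eq_square power3_eq_cube)
qed


lemma borel_measurable_fbi_kernel_Aop:
  assumes "u \<in> L2_torus"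
  shows "fbi_kernel_Aop h u k z \<zeta> \<in> borel_measurable lborel"
proof -
  have [measurable]: "fbi_kernel h u z \<zeta> \<in> borel_measurable borel"
    using borel_measurable_fbi_kernel[OF assms] by simp
  have [measurable]: "(\<lambda>y::real^'a. y $ k) \<in> borel_measurable borel"
    by (intro borel_measurable_continuous_onI continuous_intros)
  show ?thesis
    unfolding fbi_kernel_Aop_def by measurable
qed

lemma norm_fbi_kernel_Aop_le:
  "norm (fbi_kernel_Aop h u k z \<zeta> y) \<le> norm (jap \<zeta>) * (norm z + norm y) * norm (fbi_kernel h u z \<zeta> y)"
proof -
  have "norm (z$k - complex_of_real (y$k)) \<le> norm z + norm y"
    using norm_triangle_ineq4[of "z$k" "complex_of_real (y$k)"]
      Finite_Cartesian_Product.norm_nth_le[of z k] component_le_norm_cart[of y k] by simp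
  then show ?thesis
    unfolding fbi_kernel_Aop_def norm_mult norm_ii mult_1_left by (intro mult_right_mono mult_left_mono) auto
qed

lemma fbi_kernel_locally_dominated:
  fixes u :: "real^'n::finite \<Rightarrow> complex"
  assumes h: "h > 0" and u: "u \<in> L2_torus" and \<zeta>0: "\<zeta>0 \<in> jap_domain"
  shows "\<exists>r>0. \<exists>g. integrable lborel g \<and> (\<forall>z \<zeta>. norm (z - z0) < r \<longrightarrow> norm (\<zeta> - \<zeta>0) < r \<longrightarrow>
     \<zeta> \<in> jap_domain \<and> (\<forall>y k. norm (fbi_kernel h u z \<zeta> y) \<le> g y \<and> norm (fbi_kernel_Aop h u k z \<zeta> y) \<le> g y))"
proof -
  obtain r \<alpha> where r: "r > 0" and \<alpha>: "\<alpha> > 0" and near: "\<And>\<zeta>. norm (\<zeta> - \<zeta>0) < r \<Longrightarrow>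
      \<zeta> \<in> jap_domain \<and> norm (jap \<zeta>) \<le> norm (jap \<zeta>0) + 1 \<and> \<alpha> \<le> Re (jap \<zeta>)"
    using jap_locally_bounded[OF \<zeta>0] by blast
  define M where "M = max (norm z0 + r) (max (norm \<zeta>0 + r) (norm (jap \<zeta>0) + 1))"
  obtain C \<beta> where C: "0 \<le> C" and \<beta>: "\<beta> > 0" and bound: "\<And>z \<zeta> y. norm z \<le> M \<Longrightarrow> norm \<zeta> \<le> M \<Longrightarrow>
      norm (jap \<zeta>) \<le> M \<Longrightarrow> \<alpha> \<le> Re (jap \<zeta>) \<Longrightarrow>
      (1 + norm y) * norm (fbi_kernel h u z \<zeta> y) \<le> C * (exp (- \<beta> * (norm y)\<^sup>2) * norm (u y))"
    using fbi_kernel_gaussian_bound[OF \<alpha> h, of M u] by blast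
  define D where "D = max 1 M"
  define g where "g y = D\<^sup>2 * C * (exp (- \<beta> * (norm y)\<^sup>2) * norm (u y))" for y :: "real^'n"
  have "integrable lborel g"
    unfolding g_def by (intro integrable_mult_right integrable_gaussian_mult_L2_torus[OF u \<beta>])
  moreover have "\<zeta> \<in> jap_domain \<and> norm (fbi_kernel h u z \<zeta> y) \<le> g y \<and> norm (fbi_kernel_Aop h u k z \<zeta> y) \<le> g y"
    if z: "norm (z - z0) < r" and \<zeta>: "norm (\<zeta> - \<zeta>0) < r" for z \<zeta> y k
  proof (intro conjI)
    have "norm z \<le> M" "norm \<zeta> \<le> M" "norm (jap \<zeta>) \<le> M" "\<alpha> \<le> Re (jap \<zeta>)"
      using near[OF \<zeta>] z \<zeta> norm_triangle_ineq2[of z z0] norm_triangle_ineq2[of \<zeta> \<zeta>0]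
      by (auto simp: M_def)
    note K = bound[OF this, of y]
    have D: "1 \<le> D" "M \<le> D" "1 \<le> D\<^sup>2"
      by (auto simp: D_def)
    have g0: "0 \<le> C * (exp (- \<beta> * (norm y)\<^sup>2) * norm (u y))"
      using C by simp
    have "norm (fbi_kernel h u z \<zeta> y) \<le> (1 + norm y) * norm (fbi_kernel h u z \<zeta> y)"
      by (simp add: mult_le_cancel_right1)
    also have "\<dots> \<le> C * (exp (- \<beta> * (norm y)\<^sup>2) * norm (u y))"
      by (rule K)
    also have "\<dots> \<le> g y"
      unfolding g_def using D g0 by (simp add: mult.assoc mult_le_cancel_right1)
    finally show "norm (fbi_kernel h u z \<zeta> y) \<le> g y" .
    have "norm (fbi_kernel_Aop h u k z \<zeta> y) \<le> norm (jap \<zeta>) * (norm z + norm y) * norm (fbi_kernel h u z \<zeta> y)"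
      by (rule norm_fbi_kernel_Aop_le)
    also have "\<dots> \<le> D * (D * (1 + norm y)) * norm (fbi_kernel h u z \<zeta> y)"
      using \<open>norm z \<le> M\<close> \<open>norm (jap \<zeta>) \<le> M\<close> D mult_right_mono[OF D(1), of "norm y"]
      by (intro mult_right_mono mult_mono) (auto simp: algebra_simps)
    also have "\<dots> = D\<^sup>2 * ((1 + norm y) * norm (fbi_kernel h u z \<zeta> y))"
      by (simp add: power2_eq_square mult_ac)
    also have "\<dots> \<le> g y"
      unfolding g_def mult.assoc by (intro mult_left_mono K) auto
    finally show "norm (fbi_kernel_Aop h u k z \<zeta> y) \<le> g y" .
  qed (use near \<zeta> in blast)
  ultimately show ?thesis
    using r by blast
qed


lemma integrable_fbi_kernel:
  fixes u :: "real^'n::finite \<Rightarrow> complex"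
  assumes h: "h > 0" and u: "u \<in> L2_torus" and \<zeta>: "\<zeta> \<in> jap_domain"
  shows "integrable lborel (fbi_kernel h u z \<zeta>)"
    and "integrable lborel (fbi_kernel_Aop h u k z \<zeta>)"
proof -
  obtain r g where r: "r > 0" and g: "integrable lborel g" and dom: "\<forall>z' \<zeta>'. norm (z' - z) < r \<longrightarrow>
      norm (\<zeta>' - \<zeta>) < r \<longrightarrow> \<zeta>' \<in> jap_domain \<and>
      (\<forall>y k. norm (fbi_kernel h u z' \<zeta>' y) \<le> g y \<and> norm (fbi_kernel_Aop h u k z' \<zeta>' y) \<le> g y)"
    using fbi_kernel_locally_dominated[OF h u \<zeta>, of z] by blast
  have K: "norm (fbi_kernel h u z \<zeta> y) \<le> g y" and A: "norm (fbi_kernel_Aop h u k z \<zeta> y) \<le> g y" for y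
    using dom r by simp_all
  show "integrable lborel (fbi_kernel h u z \<zeta>)"
    by (rule integrable_dominated_norm[OF g borel_measurable_fbi_kernel[OF u] K])
  show "integrable lborel (fbi_kernel_Aop h u k z \<zeta>)"
    by (rule integrable_dominated_norm[OF g borel_measurable_fbi_kernel_Aop[OF u] A])
qed

lemma has_field_derivative_integral_fbi_kernel_z:
  fixes u :: "real^'n::finite \<Rightarrow> complex"
  assumes h: "h > 0" and u: "u \<in> L2_torus" and \<zeta>: "\<zeta> \<in> jap_domain"
  shows "integrable lborel (fbi_kernel_dz h u j z \<zeta>)"
    and "((\<lambda>w. \<integral>y. fbi_kernel h u (cvec_upd z j w) \<zeta> y \<partial>lborel)
           has_field_derivative (\<integral>y. fbi_kernel_dz h u j z \<zeta> y \<partial>lborel)) (at (z$j))"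
proof -
  obtain r g where r: "r > 0" and g: "integrable lborel g" and dom: "\<forall>z' \<zeta>'. norm (z' - z) < r \<longrightarrow>
      norm (\<zeta>' - \<zeta>) < r \<longrightarrow> \<zeta>' \<in> jap_domain \<and>
      (\<forall>y k. norm (fbi_kernel h u z' \<zeta>' y) \<le> g y \<and> norm (fbi_kernel_Aop h u k z' \<zeta>' y) \<le> g y)"
    using fbi_kernel_locally_dominated[OF h u \<zeta>, of z] by blast

  have deriv: "((\<lambda>w. fbi_kernel h u (cvec_upd z j w) \<zeta> y) has_field_derivative
      fbi_kernel_dz h u j (cvec_upd z j w) \<zeta> y) (at w)" for y w
    using h by (intro has_field_derivative_fbi_kernel_z) simp
  have meas: "(\<lambda>y. fbi_kernel h u (cvec_upd z j w) \<zeta> y) \<in> borel_measurable lborel" for w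
    using borel_measurable_fbi_kernel[OF u] by simp
  have bound: "norm (fbi_kernel h u (cvec_upd z j w) \<zeta> y) \<le> g y" if "w \<in> ball (z$j) r" for w y
    using dom r norm_cvec_upd_diff_less[OF that] by simp
  note parameter_integral =
    has_field_derivative_parameter_integral[where M = lborel and a = "z$j", OF r deriv meas g bound]
  show "integrable lborel (fbi_kernel_dz h u j z \<zeta>)"
    and "((\<lambda>w. \<integral>y. fbi_kernel h u (cvec_upd z j w) \<zeta> y \<partial>lborel)
           has_field_derivative (\<integral>y. fbi_kernel_dz h u j z \<zeta> y \<partial>lborel)) (at (z$j))"
    using parameter_integral by (simp_all add: cvec_upd_same)
qed


lemma has_field_derivative_integral_fbi_kernel_Aop_z:
  fixes u :: "real^'n::finite \<Rightarrow> complex"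
  assumes h: "h > 0" and u: "u \<in> L2_torus" and \<zeta>: "\<zeta> \<in> jap_domain"
  shows "integrable lborel (fbi_kernel_dz_Aop h u k z \<zeta>)"
    and "((\<lambda>w. \<integral>y. fbi_kernel_Aop h u k (cvec_upd z k w) \<zeta> y \<partial>lborel)
           has_field_derivative (\<integral>y. fbi_kernel_dz_Aop h u k z \<zeta> y \<partial>lborel)) (at (z$k))"
proof -
  obtain r g where r: "r > 0" and g: "integrable lborel g" and dom: "\<forall>z' \<zeta>'. norm (z' - z) < r \<longrightarrow>
      norm (\<zeta>' - \<zeta>) < r \<longrightarrow> \<zeta>' \<in> jap_domain \<and>
      (\<forall>y k. norm (fbi_kernel h u z' \<zeta>' y) \<le> g y \<and> norm (fbi_kernel_Aop h u k z' \<zeta>' y) \<le> g y)"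
    using fbi_kernel_locally_dominated[OF h u \<zeta>, of z] by blast
  have deriv: "((\<lambda>w. fbi_kernel_Aop h u k (cvec_upd z k w) \<zeta> y) has_field_derivative
      fbi_kernel_dz_Aop h u k (cvec_upd z k w) \<zeta> y) (at w)" for y w
    using h by (intro has_field_derivative_fbi_kernel_Aop_z) simp
  have meas: "(\<lambda>y. fbi_kernel_Aop h u k (cvec_upd z k w) \<zeta> y) \<in> borel_measurable lborel" for w
    using borel_measurable_fbi_kernel_Aop[OF u] by simp
  have bound: "norm (fbi_kernel_Aop h u k (cvec_upd z k w) \<zeta> y) \<le> g y" if "w \<in> ball (z$k) r" for w y
    using dom r norm_cvec_upd_diff_less[OF that] by simp
  note parameter_integral =
    has_field_derivative_parameter_integral[where M = lborel and a = "z$k", OF r deriv meas g bound]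
  show "integrable lborel (fbi_kernel_dz_Aop h u k z \<zeta>)"
    and "((\<lambda>w. \<integral>y. fbi_kernel_Aop h u k (cvec_upd z k w) \<zeta> y \<partial>lborel)
           has_field_derivative (\<integral>y. fbi_kernel_dz_Aop h u k z \<zeta> y \<partial>lborel)) (at (z$k))"
    using parameter_integral by (simp_all add: cvec_upd_same)
qed

lemma has_field_derivative_integral_fbi_kernel_zeta:
  fixes u :: "real^'n::finite \<Rightarrow> complex"
  assumes h: "h > 0" and u: "u \<in> L2_torus" and \<zeta>: "\<zeta> \<in> jap_domain"
  shows "integrable lborel (fbi_kernel_dzeta h u j z \<zeta>)"
    and "((\<lambda>w. \<integral>y. fbi_kernel h u z (cvec_upd \<zeta> j w) y \<partial>lborel)
           has_field_derivative (\<integral>y. fbi_kernel_dzeta h u j z \<zeta> y \<partial>lborel)) (at (\<zeta>$j))"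
proof -
  obtain r g where r: "r > 0" and g: "integrable lborel g" and dom: "\<forall>z' \<zeta>'. norm (z' - z) < r \<longrightarrow>
      norm (\<zeta>' - \<zeta>) < r \<longrightarrow> \<zeta>' \<in> jap_domain \<and>
      (\<forall>y k. norm (fbi_kernel h u z' \<zeta>' y) \<le> g y \<and> norm (fbi_kernel_Aop h u k z' \<zeta>' y) \<le> g y)"
    using fbi_kernel_locally_dominated[OF h u \<zeta>, of z] by blast
  have near: "cvec_upd \<zeta> j w \<in> jap_domain \<and> norm (fbi_kernel h u z (cvec_upd \<zeta> j w) y) \<le> g y"
    if "w \<in> ball (\<zeta>$j) r" for w y
    using dom[rule_format, of z "cvec_upd \<zeta> j w"] r norm_cvec_upd_diff_less[OF that] by simp
  have deriv: "((\<lambda>w. fbi_kernel h u z (cvec_upd \<zeta> j w) y) has_field_derivative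
      fbi_kernel_dzeta h u j z (cvec_upd \<zeta> j w) y) (at w)" if "w \<in> ball (\<zeta>$j) r" for y w
    using h near[OF that] by (intro has_field_derivative_fbi_kernel_zeta) simp_all
  have meas: "(\<lambda>y. fbi_kernel h u z (cvec_upd \<zeta> j w) y) \<in> borel_measurable lborel" for w
    using borel_measurable_fbi_kernel[OF u] by simp
  note parameter_integral =
    has_field_derivative_parameter_integral[where M = lborel and a = "\<zeta>$j", OF r deriv meas g near[THEN conjunct2]]
  show "integrable lborel (fbi_kernel_dzeta h u j z \<zeta>)"
    and "((\<lambda>w. \<integral>y. fbi_kernel h u z (cvec_upd \<zeta> j w) y \<partial>lborel)
           has_field_derivative (\<integral>y. fbi_kernel_dzeta h u j z \<zeta> y \<partial>lborel)) (at (\<zeta>$j))"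
    using parameter_integral by (simp_all add: cvec_upd_same)
qed

lemma has_field_derivative_FBI_z:
  fixes u :: "real^'n::finite \<Rightarrow> complex"
  assumes "h > 0" "u \<in> L2_torus" "\<zeta> \<in> jap_domain"
  shows "((\<lambda>w. FBI h u (cvec_upd z j w) \<zeta>) has_field_derivative
           complex_of_real (h powr (- 3 * real CARD('n) / 4)) * (\<integral>y. fbi_kernel_dz h u j z \<zeta> y \<partial>lborel)) (at (z$j))"
  unfolding FBI_eq_integral_fbi_kernel
  by (rule DERIV_cmult) (rule has_field_derivative_integral_fbi_kernel_z(2)[OF assms])

lemma has_field_derivative_FBI_zeta:
  fixes u :: "real^'n::finite \<Rightarrow> complex"
  assumes "h > 0" "u \<in> L2_torus" "\<zeta> \<in> jap_domain"
  shows "((\<lambda>w. FBI h u z (cvec_upd \<zeta> j w)) has_field_derivative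
           complex_of_real (h powr (- 3 * real CARD('n) / 4)) * (\<integral>y. fbi_kernel_dzeta h u j z \<zeta> y \<partial>lborel)) (at (\<zeta>$j))"
  unfolding FBI_eq_integral_fbi_kernel
  by (rule DERIV_cmult) (rule has_field_derivative_integral_fbi_kernel_zeta(2)[OF assms])

lemma sep_holomorphic_at_FBI:
  assumes "h > 0" "u \<in> L2_torus" "\<zeta> \<in> jap_domain"
  shows "sep_holomorphic_at (FBI h u) z \<zeta>"
  unfolding sep_holomorphic_at_def field_differentiable_def
  using has_field_derivative_FBI_z[OF assms] has_field_derivative_FBI_zeta[OF assms] by blast

lemma Aop_FBI:
  fixes u :: "real^'n::finite \<Rightarrow> complex"
  assumes h: "h > 0" and u: "u \<in> L2_torus" and \<zeta>: "\<zeta> \<in> jap_domain"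
  shows "Aop h k (FBI h u) z \<zeta> =
    complex_of_real (h powr (- 3 * real CARD('n) / 4)) * (\<integral>y. fbi_kernel_Aop h u k z \<zeta> y \<partial>lborel)"
proof -
  have integral: "(\<integral>y. fbi_kernel_Aop h u k z \<zeta> y \<partial>lborel) =
      complex_of_real h * (- \<i>) * (\<integral>y. fbi_kernel_dz h u k z \<zeta> y \<partial>lborel) - \<zeta>$k * (\<integral>y. fbi_kernel h u z \<zeta> y \<partial>lborel)"
    using h integrable_fbi_kernel(1)[OF assms] has_field_derivative_integral_fbi_kernel_z(1)[OF assms]
    by (simp add: fbi_kernel_Aop_eq)
  have derivative: "dz k (FBI h u) z \<zeta> =
      complex_of_real (h powr (- 3 * real CARD('n) / 4)) * (\<integral>y. fbi_kernel_dz h u k z \<zeta> y \<partial>lborel)"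
    unfolding dz_def by (rule DERIV_imp_deriv[OF has_field_derivative_FBI_z[OF assms]])
  show ?thesis
    unfolding Aop_def derivative FBI_eq_integral_fbi_kernel integral by (simp add: algebra_simps)
qed

lemma Aop_Aop_FBI:
  fixes u :: "real^'n::finite \<Rightarrow> complex"
  assumes h: "h > 0" and u: "u \<in> L2_torus" and \<zeta>: "\<zeta> \<in> jap_domain"
  shows "Aop h k (Aop h k (FBI h u)) z \<zeta> = complex_of_real (h powr (- 3 * real CARD('n) / 4)) *
    (\<integral>y. complex_of_real h * (- \<i>) * fbi_kernel_dz_Aop h u k z \<zeta> y - \<zeta>$k * fbi_kernel_Aop h u k z \<zeta> y \<partial>lborel)"
proof -
  have "((\<lambda>w. Aop h k (FBI h u) (cvec_upd z k w) \<zeta>) has_field_derivative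
      complex_of_real (h powr (- 3 * real CARD('n) / 4)) * (\<integral>y. fbi_kernel_dz_Aop h u k z \<zeta> y \<partial>lborel)) (at (z$k))"
    unfolding Aop_FBI[OF assms]
    by (rule DERIV_cmult) (rule has_field_derivative_integral_fbi_kernel_Aop_z(2)[OF assms])
  then have "dz k (Aop h k (FBI h u)) z \<zeta> =
      complex_of_real (h powr (- 3 * real CARD('n) / 4)) * (\<integral>y. fbi_kernel_dz_Aop h u k z \<zeta> y \<partial>lborel)"
    unfolding dz_def by (rule DERIV_imp_deriv)
  then show ?thesis
    using integrable_fbi_kernel(2)[OF assms] has_field_derivative_integral_fbi_kernel_Aop_z(1)[OF assms]
    by (simp add: Aop_def[of h k "Aop h k (FBI h u)"] Aop_FBI[OF assms] algebra_simps)
qed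


lemma Zop_eq_integral:
  fixes F :: "'n::finite cfun" and K K\<^sub>A K\<^sub>\<zeta> :: "'a \<Rightarrow> complex" and K\<^sub>A\<^sub>A :: "'n \<Rightarrow> 'a \<Rightarrow> complex"
  assumes F: "F z \<zeta> = c * (\<integral>y. K y \<partial>M)"
    and A: "Aop h j F z \<zeta> = c * (\<integral>y. K\<^sub>A y \<partial>M)"
    and AA: "\<And>k. Aop h k (Aop h k F) z \<zeta> = c * (\<integral>y. K\<^sub>A\<^sub>A k y \<partial>M)"
    and D\<zeta>: "dzeta j F z \<zeta> = c * (\<integral>y. K\<^sub>\<zeta> y \<partial>M)"
    and integrable: "integrable M K" "integrable M K\<^sub>A" "\<And>k. integrable M (K\<^sub>A\<^sub>A k)" "integrable M K\<^sub>\<zeta>"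
  shows "Zop h j F z \<zeta> = c * (\<integral>y. inverse (jap \<zeta>) * K\<^sub>A y
      + (1/2) * inverse (jap \<zeta> ^ 3) * \<zeta> $ j * (\<Sum>k\<in>UNIV. K\<^sub>A\<^sub>A k y)
      - \<i> * complex_of_real h * ((- \<i>) * K\<^sub>\<zeta> y)
      - complex_of_real (real CARD('n) / 4 * h) * inverse (jap \<zeta> ^ 2) * \<zeta> $ j * K y \<partial>M)"
  using integrable
  by (simp add: Zop_def F A AA D\<zeta> integral_sum sum_distrib_left algebra_simps)

lemma Zop_FBI_eq_0:
  fixes u :: "real^'n::finite \<Rightarrow> complex"
  assumes h: "h > 0" and u: "u \<in> L2_torus" and \<zeta>: "\<zeta> \<in> jap_domain"
  shows "Zop h j (FBI h u) z \<zeta> = 0"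
proof -
  have dzeta: "dzeta j (FBI h u) z \<zeta> =
      complex_of_real (h powr (- 3 * real CARD('n) / 4)) * (\<integral>y. fbi_kernel_dzeta h u j z \<zeta> y \<partial>lborel)"
    unfolding dzeta_def by (rule DERIV_imp_deriv[OF has_field_derivative_FBI_zeta[OF assms]])
  have integrable_AA: "integrable lborel (\<lambda>y. complex_of_real h * (- \<i>) * fbi_kernel_dz_Aop h u k z \<zeta> y
      - \<zeta>$k * fbi_kernel_Aop h u k z \<zeta> y)" for k
    using integrable_fbi_kernel(2)[OF assms] has_field_derivative_integral_fbi_kernel_Aop_z(1)[OF assms]
    by simp
  show ?thesis
    unfolding Zop_eq_integral[OF FBI_eq_integral_fbi_kernel Aop_FBI[OF assms, where k = j] Aop_Aop_FBI[OF assms]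
        dzeta integrable_fbi_kernel(1)[OF assms] integrable_fbi_kernel(2)[OF assms, where k = j] integrable_AA
        has_field_derivative_integral_fbi_kernel_zeta(1)[OF assms]]
    using h by (simp only: fbi_kernel_Zop_combination_eq_0[OF _ jap_nonzero[OF \<zeta>]]) simp
qed


lemma abs_rpd_dx_le_seminorm2:
  fixes G :: "'n::finite rfun"
  assumes "symbol_S1 G"
  shows "\<bar>rpd (Inl k) G x \<xi>\<bar> \<le> seminorm2 G * rjap \<xi>"
proof -
  have rjap_pos: "0 < rjap \<eta>" for \<eta> :: "real^'n"
    unfolding rjap_def by (simp add: add_pos_nonneg)
  define S where "S = {rjap \<xi> powr (real (n_xi ds) - 1) * \<bar>rpds ds G x \<xi>\<bar> | ds x \<xi>. length ds \<le> (2::nat)}"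
  obtain C where C: "\<And>ds x \<xi>. \<bar>rpds ds G x \<xi>\<bar> \<le> C ds * rjap \<xi> powr (1 - real (n_xi ds))"
    using assms unfolding symbol_S1_def by metis
  have "finite {ds :: ('n + 'n) list. set ds \<subseteq> UNIV \<and> length ds \<le> 2}"
    by (rule finite_lists_length_le) simp
  then have "bdd_above S"
  proof (intro bdd_aboveI[where M = "Max (C ` {ds. set ds \<subseteq> UNIV \<and> length ds \<le> 2})"])
    fix v assume "finite {ds :: ('n + 'n) list. set ds \<subseteq> UNIV \<and> length ds \<le> 2}" "v \<in> S"
    then obtain ds x \<xi> where v: "v = rjap \<xi> powr (real (n_xi ds) - 1) * \<bar>rpds ds G x \<xi>\<bar>" and "length ds \<le> 2"
      unfolding S_def by blast
    have "v \<le> rjap \<xi> powr (real (n_xi ds) - 1) * (C ds * rjap \<xi> powr (1 - real (n_xi ds)))"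
      unfolding v by (rule mult_left_mono[OF C]) simp
    also have "\<dots> = C ds"
      using rjap_pos[of \<xi>] by (simp add: powr_add[symmetric] mult_ac)
    also have "\<dots> \<le> Max (C ` {ds. set ds \<subseteq> UNIV \<and> length ds \<le> 2})"
      using \<open>finite _\<close> \<open>length ds \<le> 2\<close> by simp
    finally show "v \<le> Max (C ` {ds. set ds \<subseteq> UNIV \<and> length ds \<le> 2})" .
  qed
  moreover have "rjap \<xi> powr (real (n_xi [Inl k]) - 1) * \<bar>rpds [Inl k] G x \<xi>\<bar> \<in> S"
    unfolding S_def by (intro CollectI exI[of _ "[Inl k]"] exI[of _ x] exI[of _ \<xi>]) simp
  ultimately have "rjap \<xi> powr (-1) * \<bar>rpd (Inl k) G x \<xi>\<bar> \<le> seminorm2 G"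
    unfolding seminorm2_def S_def[symmetric] by (auto dest: cSup_upper simp: n_xi_def rpds_def)
  then show ?thesis
    using rjap_pos[of \<xi>] by (simp add: powr_minus field_simps)
qed

lemma Lambda_pt_in_jap_domain:
  fixes G :: "'n::finite rfun"
  assumes S1: "symbol_S1 G" and small: "seminorm2 G < 1 / real CARD('n)"
  shows "snd (Lambda_pt G x \<xi>) \<in> jap_domain"
proof -
  define s where "s = seminorm2 G"
  define g where "g k = rpd (Inl k) G x \<xi>" for k
  have rjap: "0 < rjap \<xi>" "(rjap \<xi>)\<^sup>2 = 1 + (norm \<xi>)\<^sup>2"
    unfolding rjap_def by (simp_all add: add_pos_nonneg)
  have g: "\<bar>g k\<bar> \<le> s * rjap \<xi>" for k
    unfolding g_def s_def by (rule abs_rpd_dx_le_seminorm2[OF S1])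
  have "0 \<le> s * rjap \<xi>"
    using g[of undefined] by (meson abs_ge_zero order_trans)
  then have "0 \<le> s"
    using rjap(1) by (simp add: zero_le_mult_iff)
  have "real CARD('n) * s\<^sup>2 < 1"
  proof -
    have "s < 1 / real CARD('n)" "1 / real CARD('n) \<le> 1"
      using small by (simp_all add: s_def)
    moreover have "s * s \<le> s * (1 / real CARD('n))"
      using \<open>0 \<le> s\<close> \<open>s < 1 / real CARD('n)\<close> by (intro mult_left_mono) auto
    then have "real CARD('n) * (s * s) \<le> s"
      by (simp add: field_simps)
    ultimately show ?thesis
      unfolding power2_eq_square by linarith
  qed
  then have "real CARD('n) * s\<^sup>2 * (1 + (norm \<xi>)\<^sup>2) < 1 + (norm \<xi>)\<^sup>2"
    by (simp add: add_pos_nonneg)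
  moreover have "(g k)\<^sup>2 \<le> s\<^sup>2 * (1 + (norm \<xi>)\<^sup>2)" for k
    using power_mono[OF g[of k] abs_ge_zero, of 2] by (simp add: power_mult_distrib rjap(2))
  then have "(\<Sum>k\<in>UNIV. (g k)\<^sup>2) \<le> real CARD('n) * s\<^sup>2 * (1 + (norm \<xi>)\<^sup>2)"
    using sum_mono[of UNIV "\<lambda>k. (g k)\<^sup>2" "\<lambda>_. s\<^sup>2 * (1 + (norm \<xi>)\<^sup>2)"] by simp
  ultimately have "(\<Sum>k\<in>UNIV. (g k)\<^sup>2) < 1 + (norm \<xi>)\<^sup>2"
    by linarith
  moreover have "Re (1 + (\<Sum>j\<in>UNIV. (snd (Lambda_pt G x \<xi>) $ j)\<^sup>2)) = 1 + (norm \<xi>)\<^sup>2 - (\<Sum>k\<in>UNIV. (g k)\<^sup>2)"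
    by (simp add: Lambda_pt_def g_def power2_eq_square sum_subtractf norm_vec_def L2_set_def sum_nonneg)
  ultimately show ?thesis
    by (simp add: jap_domain_def)
qed

theorem proposition5p1:
  shows "\<exists>\<epsilon>0>0. \<forall>(G :: 'n::finite rfun) (h::real) (\<delta>::real) (u :: real^'n \<Rightarrow> complex).
     symbol_S1 G \<and> seminorm2 G < \<epsilon>0 \<and> h > 0 \<and> \<delta> > 0 \<and> u \<in> A_delta \<delta> \<longrightarrow>
       (\<exists>\<Omega>. open \<Omega> \<and> Lambda G \<subseteq> \<Omega> \<and>
          (\<forall>(z, \<zeta>)\<in>\<Omega>. sep_holomorphic_at (FBI h u) z \<zeta> \<and>
                         (\<forall>j. Zop h j (FBI h u) z \<zeta> = 0))) \<and>
       (\<forall>x \<xi> j. Zop h j (FBI h u) (fst (Lambda_pt G x \<xi>)) (snd (Lambda_pt G x \<xi>)) = 0)"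
proof (intro exI[of _ "1 / real CARD('n)"] conjI allI impI)
  show "0 < 1 / real CARD('n)"
    by simp
  fix G :: "'n rfun" and h \<delta> :: real and u :: "real^'n \<Rightarrow> complex"
  assume "symbol_S1 G \<and> seminorm2 G < 1 / real CARD('n) \<and> h > 0 \<and> \<delta> > 0 \<and> u \<in> A_delta \<delta>"
  then have h: "h > 0" and u: "u \<in> L2_torus"
    and \<Lambda>: "\<And>x \<xi>. snd (Lambda_pt G x \<xi>) \<in> jap_domain"
    using Lambda_pt_in_jap_domain by (auto simp: A_delta_def)
  show "\<exists>\<Omega>. open \<Omega> \<and> Lambda G \<subseteq> \<Omega> \<and>
      (\<forall>(z, \<zeta>)\<in>\<Omega>. sep_holomorphic_at (FBI h u) z \<zeta> \<and> (\<forall>j. Zop h j (FBI h u) z \<zeta> = 0))"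
  proof (intro exI[of _ "UNIV \<times> jap_domain"] conjI)
    show "open (UNIV \<times> jap_domain :: ((complex^'n) \<times> (complex^'n)) set)"
      by (intro open_Times open_UNIV open_jap_domain)
    show "Lambda G \<subseteq> UNIV \<times> jap_domain"
      unfolding Lambda_def image_subset_iff by (auto simp: mem_Times_iff \<Lambda>)
    show "\<forall>(z, \<zeta>)\<in>UNIV \<times> jap_domain. sep_holomorphic_at (FBI h u) z \<zeta> \<and> (\<forall>j. Zop h j (FBI h u) z \<zeta> = 0)"
      using sep_holomorphic_at_FBI[OF h u] Zop_FBI_eq_0[OF h u] by auto
  qed
  show "Zop h j (FBI h u) (fst (Lambda_pt G x \<xi>)) (snd (Lambda_pt G x \<xi>)) = 0" for x \<xi> j
    by (rule Zop_FBI_eq_0[OF h u \<Lambda>])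
qed

end
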